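(* Let $V\in\mathrm{Der}[[\mathbb{C}^n,0]]$ and let $\rho:\mathbb{R}\to\mathrm{Diff}[[\mathbb{C}^n,0]]$ be given by $\rho(t)=e^{tV}$. Let $\lambda_1,\dots,\lambda_n$ be the spectrum (eigenvalues with multiplicity) of the linear part of $V$. Then every matrix coefficient of $\rho$, viewed as a function of $t\in\mathbb{R}$, belongs to the ring $\mathbb{C}[e^{\lambda_1t},\dots,e^{\lambda_nt},t]$.
   Context: $\mathrm{Der}[[\mathbb{C}^n,0]]$ is the Lie algebra of $\mathbb{C}$-linear derivations of $\mathbb{C}[[x_1,\dots,x_n]]$ preserving the maximal ideal $\mathfrak m$; its linear part is the induced linear map on $\mathfrak m/\mathfrak m^2$. $e^{tV}=\sum_k t^kV^k/k!$ is an element of the group $\mathrm{Diff}[[\mathbb{C}^n,0]]$ of $\mathbb{C}$-algebra automorphisms of $\mathbb{C}[[x]]$ preserving $\mathfrak m$. For multi-indices $\alpha,\beta\in\mathbb{N}^n$, the matrix coefficient $\rho_{\alpha,\beta}(t)$ is the coefficient of the monomial $x^\beta$ in $\rho(t)(x^\alpha)$. *)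

theory Defs
  imports "HOL-Analysis.Analysis" "HOL-Computational_Algebra.Polynomial"
begin

text \<open>Formal power series in variables indexed by a finite type 'n:
  a series is its coefficient function on multi-indices.\<close>
type_synonym 'n mfps = "('n \<Rightarrow> nat) \<Rightarrow> complex"

definition mfps_mult :: "'n::finite mfps \<Rightarrow> 'n mfps \<Rightarrow> 'n mfps" where
  "mfps_mult f g = (\<lambda>\<gamma>. \<Sum>\<alpha>\<in>{\<alpha>. \<forall>i. \<alpha> i \<le> \<gamma> i}. f \<alpha> * g (\<lambda>i. \<gamma> i - \<alpha> i))"

definition mono :: "('n \<Rightarrow> nat) \<Rightarrow> 'n mfps" where
  "mono \<alpha> = (\<lambda>\<beta>. if \<beta> = \<alpha> then 1 else 0)"

definition coord :: "'n \<Rightarrow> 'n mfps" where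
  "coord i = mono (\<lambda>j. if j = i then 1 else 0)"

definition is_der0 :: "('n::finite mfps \<Rightarrow> 'n mfps) \<Rightarrow> bool" where
  "is_der0 D \<longleftrightarrow>
     (\<forall>f g. D (\<lambda>\<beta>. f \<beta> + g \<beta>) = (\<lambda>\<beta>. D f \<beta> + D g \<beta>)) \<and>
     (\<forall>c f. D (\<lambda>\<beta>. c * f \<beta>) = (\<lambda>\<beta>. c * D f \<beta>)) \<and>
     (\<forall>f g. D (mfps_mult f g) = (\<lambda>\<beta>. mfps_mult (D f) g \<beta> + mfps_mult f (D g) \<beta>)) \<and>
     (\<forall>f. f (\<lambda>_. 0) = 0 \<longrightarrow> D f (\<lambda>_. 0) = 0)"

text \<open>Matrix of the linear part: entry (i,j) is the coefficient of x_j in D(x_i)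
  (transpose of the matrix of the induced map on m/m^2; same characteristic polynomial).\<close>
definition linear_part :: "('n::finite mfps \<Rightarrow> 'n mfps) \<Rightarrow> complex^'n^'n" where
  "linear_part D = (\<chi> i j. D (coord i) (\<lambda>k. if k = j then 1 else 0))"

definition charpoly_cart :: "'a::comm_ring_1^'n::finite^'n \<Rightarrow> 'a poly" where
  "charpoly_cart A = det (\<chi> i j. (if i = j then [:0, 1:] else 0) - [:A $ i $ j:])"

definition mat_coeff :: "('n::finite mfps \<Rightarrow> 'n mfps) \<Rightarrow> ('n \<Rightarrow> nat) \<Rightarrow> ('n \<Rightarrow> nat) \<Rightarrow> real \<Rightarrow> complex" where
  "mat_coeff V \<alpha> \<beta> t = (\<Sum>k. complex_of_real t ^ k / of_nat (fact k) * (V ^^ k) (mono \<alpha>) \<beta>)"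

definition exp_poly_ring :: "('n::finite \<Rightarrow> complex) \<Rightarrow> (real \<Rightarrow> complex) set" where
  "exp_poly_ring lam = {f. \<exists>P c. finite (P :: (nat \<times> ('n \<Rightarrow> nat)) set) \<and>
      (\<forall>t. f t = (\<Sum>(m, k)\<in>P. c (m, k) * complex_of_real t ^ m *
                    (\<Prod>i\<in>UNIV. exp (lam i * complex_of_real t) ^ k i)))}"

end

theory Submission
  imports Defs
begin

(* Let a k be the coefficient of x^beta in V^k(x^alpha); then mat_coeff V alpha beta is the
   exponential generating function of a.  We show that a is annihilated by a product of
   shift operators (E - mu), each mu being a sum of eigenvalues lam i with nonnegative integer
   multiplicities.  Such sequences are combinations of k \<mapsto> (k choose m) mu^(k-m), whose
   generating functions t^m/m! * e^(mu t) lie in C[e^(lam_1 t),...,e^(lam_n t), t].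

   The annihilator comes from the filtration of C[[x]] by the powers m^d of the maximal ideal.
   A derivation V preserves every m^d and acts on m/m^2 through its linear part A.  By the
   Cayley-Hamilton theorem and a primary decomposition, each coordinate x_i is, modulo m^2, a
   sum of linear forms killed by (V - lam)^n.  A Leibniz rule for (V - mu - nu)^(p+q) (f g)
   then shows that every monomial of degree d is, modulo m^(d+1), a sum of series killed by
   (V - mu)^(d n + 1) modulo m^(d+1), where mu is a sum of d eigenvalues.  Composing these
   operators for d = 0, ..., deg beta kills the coefficient of x^beta in every V^k(x^alpha). *)

subsection \<open>Quasi-exponential sequences\<close>

text \<open>The basic sequence k \<mapsto> (k choose m) mu^(k-m); its exponential generating function
  is t^m/m! * e^(mu t).\<close>
definition qexp :: "nat \<Rightarrow> complex \<Rightarrow> nat \<Rightarrow> complex" where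
  "qexp m \<mu> k = of_nat (k choose m) * \<mu> ^ (k - m)"

definition shift_sub :: "complex \<Rightarrow> (nat \<Rightarrow> complex) \<Rightarrow> nat \<Rightarrow> complex" where
  "shift_sub \<mu> a = (\<lambda>k. a (Suc k) - \<mu> * a k)"

inductive_set qexp_span :: "complex set \<Rightarrow> (nat \<Rightarrow> complex) set" for M where
  zero: "(\<lambda>_. 0) \<in> qexp_span M"
| add_qexp: "a \<in> qexp_span M \<Longrightarrow> \<mu> \<in> M \<Longrightarrow> (\<lambda>k. a k + c * qexp m \<mu> k) \<in> qexp_span M"

lemma qexp_span_add:
  assumes a: "a \<in> qexp_span M"
  shows "b \<in> qexp_span M \<Longrightarrow> (\<lambda>k. a k + b k) \<in> qexp_span M"
proof (induction b rule: qexp_span.induct)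
  case zero then show ?case using a by simp
next
  case (add_qexp b \<mu> c m)
  have "(\<lambda>k. (\<lambda>k. a k + b k) k + c * qexp m \<mu> k) \<in> qexp_span M"
    using add_qexp by (intro qexp_span.add_qexp) auto
  then show ?case by (simp add: add.assoc)
qed

lemma qexp_span_smult: "a \<in> qexp_span M \<Longrightarrow> (\<lambda>k. d * a k) \<in> qexp_span M"
proof (induction a rule: qexp_span.induct)
  case zero then show ?case by (simp add: qexp_span.zero)
next
  case (add_qexp b \<mu> c m)
  have "(\<lambda>k. (\<lambda>k. d * b k) k + (d * c) * qexp m \<mu> k) \<in> qexp_span M"
    using add_qexp by (intro qexp_span.add_qexp) auto
  then show ?case by (simp add: algebra_simps)
qed

lemma qexp_span_qexp: "\<mu> \<in> M \<Longrightarrow> (\<lambda>k. c * qexp m \<mu> k) \<in> qexp_span M"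
  using qexp_span.add_qexp[OF qexp_span.zero, of \<mu> M c m] by simp

lemma shift_sub_add: "shift_sub \<nu> (\<lambda>k. a k + b k) = (\<lambda>k. shift_sub \<nu> a k + shift_sub \<nu> b k)"
  by (simp add: shift_sub_def fun_eq_iff algebra_simps)

lemma shift_sub_smult: "shift_sub \<nu> (\<lambda>k. d * a k) = (\<lambda>k. d * shift_sub \<nu> a k)"
  by (simp add: shift_sub_def fun_eq_iff algebra_simps)

text \<open>E - nu acts on the basic sequences like differentiation of t^m e^(mu t) shifted by nu.\<close>
lemma shift_sub_qexp_0: "shift_sub \<nu> (qexp 0 \<mu>) = (\<lambda>k. (\<mu> - \<nu>) * qexp 0 \<mu> k)"
  by (simp add: shift_sub_def qexp_def fun_eq_iff algebra_simps)

lemma shift_sub_qexp_Suc: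
  "shift_sub \<nu> (qexp (Suc m) \<mu>) = (\<lambda>k. qexp m \<mu> k + (\<mu> - \<nu>) * qexp (Suc m) \<mu> k)"
proof (rule ext)
  fix k
  show "shift_sub \<nu> (qexp (Suc m) \<mu>) k = qexp m \<mu> k + (\<mu> - \<nu>) * qexp (Suc m) \<mu> k"
  proof (cases "m \<le> k")
    case True
    then have e: "Suc k - Suc m = k - m" by simp
    have "shift_sub \<nu> (qexp (Suc m) \<mu>) k
        = of_nat (Suc k choose Suc m) * \<mu> ^ (k - m) - \<nu> * (of_nat (k choose Suc m) * \<mu> ^ (k - Suc m))"
      by (simp add: shift_sub_def qexp_def e)
    also have "of_nat (Suc k choose Suc m) = (of_nat (k choose m) + of_nat (k choose Suc m) :: complex)"
      by simp
    finally have pascal: "shift_sub \<nu> (qexp (Suc m) \<mu>) k = of_nat (k choose m) * \<mu> ^ (k - m)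
        + of_nat (k choose Suc m) * (\<mu> ^ (k - m) - \<nu> * \<mu> ^ (k - Suc m))"
      by (simp add: algebra_simps)
    show ?thesis
    proof (cases "m = k")
      case True then show ?thesis using pascal by (simp add: qexp_def)
    next
      case False
      then have "\<mu> ^ (k - m) = \<mu> * \<mu> ^ (k - Suc m)" using \<open>m \<le> k\<close>
        by (metis Suc_diff_Suc le_neq_implies_less power_Suc)
      then show ?thesis using pascal by (simp add: qexp_def algebra_simps)
    qed
  next
    case False
    then show ?thesis by (simp add: shift_sub_def qexp_def binomial_eq_0 algebra_simps)
  qed
qed

lemma shift_imageI: "b \<in> qexp_span M \<Longrightarrow> shift_sub \<nu> b = a \<Longrightarrow> a \<in> shift_sub \<nu> ` qexp_span M"
  by blast

lemma shift_image_add: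
  assumes "a \<in> shift_sub \<nu> ` qexp_span M" "b \<in> shift_sub \<nu> ` qexp_span M"
  shows "(\<lambda>k. a k + b k) \<in> shift_sub \<nu> ` qexp_span M"
proof -
  obtain a' b' where ab: "a' \<in> qexp_span M" "b' \<in> qexp_span M"
    and "a = shift_sub \<nu> a'" "b = shift_sub \<nu> b'"
    using assms by blast
  then have "(\<lambda>k. a k + b k) = shift_sub \<nu> (\<lambda>k. a' k + b' k)" by (simp add: shift_sub_add)
  with qexp_span_add[OF ab] show ?thesis by blast
qed

lemma shift_image_smult:
  assumes "a \<in> shift_sub \<nu> ` qexp_span M"
  shows "(\<lambda>k. d * a k) \<in> shift_sub \<nu> ` qexp_span M"
proof -
  obtain a' where "a' \<in> qexp_span M" "a = shift_sub \<nu> a'" using assms by blast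
  then show ?thesis using shift_imageI[OF qexp_span_smult[of a' M d]] by (simp add: shift_sub_smult)
qed

text \<open>Every basic sequence lies in the image of E - nu on the span (for nu in M): for mu = nu
  the next basic sequence is a preimage, otherwise E - nu is invertible on the mu-part.\<close>
lemma qexp_in_shift_image:
  assumes "\<mu> \<in> M" "\<nu> \<in> M"
  shows "qexp m \<mu> \<in> shift_sub \<nu> ` qexp_span M"
proof (cases "\<mu> = \<nu>")
  case True
  have "shift_sub \<nu> (qexp (Suc m) \<mu>) = qexp m \<mu>" using True by (simp add: shift_sub_qexp_Suc)
  moreover have "qexp (Suc m) \<mu> \<in> qexp_span M" using qexp_span_qexp[OF assms(1), of 1 "Suc m"] by simp
  ultimately show ?thesis by (rule shift_imageI[rotated])
next
  case False
  define c where "c = 1 / (\<mu> - \<nu>)"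
  have preimage: "(\<lambda>k. c * qexp m' \<mu> k) \<in> qexp_span M" for m'
    using qexp_span_qexp assms by blast
  show ?thesis
  proof (induction m)
    case 0
    have "shift_sub \<nu> (\<lambda>k. c * qexp 0 \<mu> k) = qexp 0 \<mu>"
      unfolding shift_sub_smult shift_sub_qexp_0 using False by (simp add: c_def fun_eq_iff)
    then show ?case by (rule shift_imageI[OF preimage])
  next
    case (Suc m)
    have "shift_sub \<nu> (\<lambda>k. c * qexp (Suc m) \<mu> k) = (\<lambda>k. c * qexp m \<mu> k + qexp (Suc m) \<mu> k)"
      unfolding shift_sub_smult shift_sub_qexp_Suc using False
      by (simp add: c_def fun_eq_iff distrib_left)
    then have "(\<lambda>k. c * qexp m \<mu> k + qexp (Suc m) \<mu> k) \<in> shift_sub \<nu> ` qexp_span M"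
      by (rule shift_imageI[OF preimage])
    from shift_image_add[OF this shift_image_smult[OF Suc, of "- c"]] show ?case
      by (simp add: algebra_simps)
  qed
qed

lemma qexp_span_shift_image:
  "a \<in> qexp_span M \<Longrightarrow> \<nu> \<in> M \<Longrightarrow> a \<in> shift_sub \<nu> ` qexp_span M"
proof (induction a rule: qexp_span.induct)
  case zero
  have "shift_sub \<nu> (\<lambda>_. 0) = (\<lambda>_. 0)" by (simp add: shift_sub_def)
  then show ?case by (rule shift_imageI[OF qexp_span.zero])
next
  case (add_qexp a \<mu> c m)
  show ?case
    using shift_image_add[OF add_qexp.IH[OF add_qexp.prems]
        shift_image_smult[OF qexp_in_shift_image[OF add_qexp.hyps(2) add_qexp.prems]]] .
qed

text \<open>The span is closed under solving (E - nu) a = b: the kernel of E - nu is spanned by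
  nu^k = qexp 0 nu k.\<close>
lemma qexp_span_shift_sub_inv:
  assumes "shift_sub \<nu> a \<in> qexp_span M" "\<nu> \<in> M"
  shows "a \<in> qexp_span M"
proof -
  obtain b where b: "b \<in> qexp_span M" "shift_sub \<nu> b = shift_sub \<nu> a"
    using qexp_span_shift_image[OF assms] by auto
  define d where "d = (\<lambda>k. a k - b k)"
  have d_Suc: "d (Suc k) = \<nu> * d k" for k
  proof -
    have "a (Suc k) - \<nu> * a k = b (Suc k) - \<nu> * b k"
      using b(2) unfolding shift_sub_def fun_eq_iff by metis
    then show ?thesis unfolding d_def by (simp add: algebra_simps)
  qed
  define d0 where "d0 = d 0"
  have d_eq: "d k = d0 * \<nu> ^ k" for k unfolding d0_def by (induction k) (simp_all add: d_Suc)
  have "(\<lambda>k. b k + d0 * qexp 0 \<nu> k) \<in> qexp_span M"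
    using qexp_span_add[OF b(1) qexp_span_qexp[OF assms(2)]] .
  moreover have "(\<lambda>k. b k + d0 * qexp 0 \<nu> k) = a"
  proof
    fix k show "b k + d0 * qexp 0 \<nu> k = a k"
      using d_eq[of k] unfolding d_def by (simp add: qexp_def diff_eq_eq add.commute)
  qed
  ultimately show ?thesis by simp
qed

lemma annihilated_in_qexp_span:
  "set ms \<subseteq> M \<Longrightarrow> fold shift_sub ms a = (\<lambda>_. 0) \<Longrightarrow> a \<in> qexp_span M"
proof (induction ms arbitrary: a)
  case Nil then show ?case using qexp_span.zero by simp
next
  case (Cons \<mu> ms)
  then have "shift_sub \<mu> a \<in> qexp_span M" by simp
  then show ?case using qexp_span_shift_sub_inv Cons.prems by auto
qed

subsection \<open>Exponential generating functions of quasi-exponential sequences\<close>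

lemma qexp_egf_sums:
  "(\<lambda>k. complex_of_real t ^ k / of_nat (fact k) * (c * qexp m \<mu> k)) sums
     (c / of_nat (fact m) * complex_of_real t ^ m * exp (\<mu> * complex_of_real t))"
proof -
  define x where "x = \<mu> * complex_of_real t"
  define f where "f = (\<lambda>k. complex_of_real t ^ k / of_nat (fact k) * (c * qexp m \<mu> k))"
  have head: "sum f {..<m} = 0" by (auto simp: f_def qexp_def binomial_eq_0 intro!: sum.neutral)
  have tail: "f (i + m) = (c / of_nat (fact m) * complex_of_real t ^ m) * (x ^ i /\<^sub>R fact i)" for i
  proof -
    have "of_nat ((i + m) choose m) = (fact (i + m) / (fact m * fact i) :: complex)"
      using binomial_fact[of m "i + m", where 'a=complex] by simp
    moreover have "(fact (i + m) :: complex) \<noteq> 0" by simp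
    ultimately show ?thesis
      by (simp add: f_def qexp_def x_def scaleR_conv_of_real power_add power_mult_distrib field_simps)
  qed
  have "(\<lambda>i. f (i + m)) sums ((c / of_nat (fact m) * complex_of_real t ^ m) * exp x)"
    unfolding tail by (intro sums_mult exp_converges)
  then have "f sums ((c / of_nat (fact m) * complex_of_real t ^ m) * exp x + sum f {..<m})"
    using sums_iff_shift by blast
  then show ?thesis using head by (simp add: f_def x_def)
qed

lemma exp_poly_ring_zero: "(\<lambda>t. 0) \<in> exp_poly_ring lam"
  unfolding exp_poly_ring_def by (rule CollectI, rule exI[of _ "{}"]) simp

lemma exp_poly_ring_add:
  assumes "f \<in> exp_poly_ring lam" "g \<in> exp_poly_ring lam"
  shows "(\<lambda>t. f t + g t) \<in> exp_poly_ring lam"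
proof -
  define T where "T = (\<lambda>(m::nat, k::'a \<Rightarrow> nat) (t::real). complex_of_real t ^ m *
                    (\<Prod>i\<in>UNIV. exp (lam i * complex_of_real t) ^ k i))"
  have T_eq: "(\<lambda>(m, k). c (m, k) * complex_of_real t ^ m *
                 (\<Prod>i\<in>UNIV. exp (lam i * complex_of_real t) ^ k i)) = (\<lambda>p. c p * T p t)" for c t
    by (auto simp: T_def fun_eq_iff)
  obtain P1 c1 where 1: "finite P1" "\<And>t. f t = (\<Sum>p\<in>P1. c1 p * T p t)"
    using assms(1) unfolding exp_poly_ring_def T_eq by blast
  obtain P2 c2 where 2: "finite P2" "\<And>t. g t = (\<Sum>p\<in>P2. c2 p * T p t)"
    using assms(2) unfolding exp_poly_ring_def T_eq by blast
  define c where "c = (\<lambda>p. (if p \<in> P1 then c1 p else 0) + (if p \<in> P2 then c2 p else 0))"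
  have "f t + g t = (\<Sum>p\<in>P1 \<union> P2. c p * T p t)" for t
  proof -
    have "(\<Sum>p\<in>P1 \<union> P2. c p * T p t) = (\<Sum>p\<in>P1 \<union> P2. (if p \<in> P1 then c1 p * T p t else 0))
          + (\<Sum>p\<in>P1 \<union> P2. (if p \<in> P2 then c2 p * T p t else 0))"
      unfolding sum.distrib[symmetric] by (rule sum.cong) (auto simp: c_def distrib_right)
    also have "\<dots> = (\<Sum>p\<in>P1. c1 p * T p t) + (\<Sum>p\<in>P2. c2 p * T p t)"
      using 1(1) 2(1) by (simp add: sum.If_cases Int_absorb1 Int_absorb2)
    finally show ?thesis using 1 2 by simp
  qed
  then show ?thesis unfolding exp_poly_ring_def T_eq using 1(1) 2(1) by blast
qed

lemma exp_poly_ring_term: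
  "(\<lambda>t. c * complex_of_real t ^ m * exp ((\<Sum>i\<in>UNIV. of_nat (\<gamma> i) * lam i) * complex_of_real t))
     \<in> exp_poly_ring (lam :: 'n::finite \<Rightarrow> complex)"
proof -
  have "exp ((\<Sum>i\<in>UNIV. of_nat (\<gamma> i) * lam i) * complex_of_real t) =
        (\<Prod>i\<in>UNIV. exp (lam i * complex_of_real t) ^ \<gamma> i)" for t
    by (simp add: sum_distrib_right exp_sum exp_of_nat_mult[symmetric] mult.assoc)
  then show ?thesis unfolding exp_poly_ring_def
    by (intro CollectI exI[of _ "{(m, \<gamma>)}"] exI[of _ "\<lambda>_. c"]) simp
qed

definition eig_sums :: "('n::finite \<Rightarrow> complex) \<Rightarrow> complex set" where
  "eig_sums lam = {\<Sum>i\<in>UNIV. of_nat (\<gamma> i) * lam i | \<gamma>. True}"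

lemma sum_list_in_eig_sums: "set xs \<subseteq> range lam \<Longrightarrow> sum_list xs \<in> eig_sums lam"
proof (induction xs)
  case Nil
  show ?case unfolding eig_sums_def by (rule CollectI, rule exI[of _ "\<lambda>_. 0"]) simp
next
  case (Cons x xs)
  then obtain \<gamma> where \<gamma>: "sum_list xs = (\<Sum>i\<in>UNIV. of_nat (\<gamma> i) * lam i)"
    unfolding eig_sums_def by auto
  from Cons.prems obtain j where j: "x = lam j" by auto
  define \<gamma>' where "\<gamma>' = (\<lambda>i. \<gamma> i + (if i = j then 1 else 0))"
  have "(\<Sum>i\<in>UNIV. of_nat (\<gamma>' i) * lam i)
      = (\<Sum>i\<in>UNIV. of_nat (\<gamma> i) * lam i) + (\<Sum>i\<in>UNIV. if i = j then lam i else 0)"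
    unfolding sum.distrib[symmetric] by (rule sum.cong) (auto simp: \<gamma>'_def distrib_right)
  also have "\<dots> = sum_list (x # xs)" using \<gamma> j by simp
  finally show ?case unfolding eig_sums_def by (intro CollectI exI[of _ \<gamma>']) simp
qed

lemma qexp_span_egf:
  fixes lam :: "'n::finite \<Rightarrow> complex"
  assumes "a \<in> qexp_span (eig_sums lam)"
  shows "(\<forall>t. summable (\<lambda>k. complex_of_real t ^ k / of_nat (fact k) * a k)) \<and>
         (\<lambda>t. \<Sum>k. complex_of_real t ^ k / of_nat (fact k) * a k) \<in> exp_poly_ring lam"
  using assms
proof (induction a rule: qexp_span.induct)
  case zero then show ?case using exp_poly_ring_zero by simp
next
  case (add_qexp a \<mu> c m)
  obtain \<gamma> where \<mu>: "\<mu> = (\<Sum>i\<in>UNIV. of_nat (\<gamma> i) * lam i)"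
    using add_qexp.hyps(2) unfolding eig_sums_def by blast
  define e where "e t k = complex_of_real t ^ k / of_nat (fact k)" for t k
  have sums: "(\<lambda>k. e t k * (c * qexp m \<mu> k)) sums
     (c / of_nat (fact m) * complex_of_real t ^ m * exp (\<mu> * complex_of_real t))" for t
    unfolding e_def by (rule qexp_egf_sums)
  have split: "(\<lambda>k. e t k * (a k + c * qexp m \<mu> k)) = (\<lambda>k. e t k * a k + e t k * (c * qexp m \<mu> k))"
    for t by (simp add: distrib_left)
  have "summable (\<lambda>k. e t k * (a k + c * qexp m \<mu> k))" for t
    unfolding split using add_qexp.IH sums[of t] by (intro summable_add) (auto simp: e_def sums_iff)
  moreover have "(\<lambda>t. \<Sum>k. e t k * (a k + c * qexp m \<mu> k)) =
     (\<lambda>t. (\<Sum>k. e t k * a k) + c / of_nat (fact m) * complex_of_real t ^ m * exp (\<mu> * complex_of_real t))"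
    unfolding split using add_qexp.IH sums
    by (subst suminf_add[symmetric]) (auto simp: e_def sums_iff)
  moreover have "(\<lambda>t. c / of_nat (fact m) * complex_of_real t ^ m * exp (\<mu> * complex_of_real t))
      \<in> exp_poly_ring lam"
    unfolding \<mu> by (rule exp_poly_ring_term)
  ultimately show ?case using exp_poly_ring_add add_qexp.IH by (auto simp: e_def)
qed

subsection \<open>Cayley-Hamilton for the characteristic matrix\<close>

text \<open>We work with the row action x \<mapsto> x v* A, which matches how a derivation acts on the
  coefficient vectors of linear forms (see linform below).\<close>

definition char_mat :: "complex^'n::finite^'n \<Rightarrow> complex poly^'n^'n" where
  "char_mat A = (\<chi> i j. (if i = j then [:0, 1:] else 0) - [:A $ i $ j:])"

definition adj_mat :: "complex^'n::finite^'n \<Rightarrow> complex poly^'n^'n" where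
  "adj_mat A = (\<chi> i j. det (\<chi> r. if r = j then axis i 1 else char_mat A $ r))"

lemma charpoly_char_mat: "charpoly_cart A = det (char_mat A)"
  unfolding charpoly_cart_def char_mat_def ..

lemma char_mat_adj:
  "(\<Sum>i\<in>UNIV. char_mat A $ k $ i * adj_mat A $ i $ j) = (if k = j then det (char_mat A) else 0)"
proof -
  let ?M = "char_mat A"
  have "(\<Sum>i\<in>UNIV. ?M $ k $ i * adj_mat A $ i $ j) =
        (\<Sum>i\<in>UNIV. det (\<chi> r. if r = j then ?M $ k $ i *s axis i 1 else ?M $ r))"
    unfolding adj_mat_def by (simp add: det_row_mul)
  also have "\<dots> = det (\<chi> r. if r = j then (\<Sum>i\<in>UNIV. ?M $ k $ i *s axis i 1) else ?M $ r)"
    by (rule det_linear_row_sum[symmetric]) simp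
  also have "\<dots> = det (\<chi> r. if r = j then ?M $ k else ?M $ r)"
    unfolding basis_expansion ..
  also have "\<dots> = (if k = j then det ?M else 0)"
  proof (cases "k = j")
    case True
    then have "(\<chi> r. if r = j then ?M $ k else ?M $ r) = ?M" by (simp add: vec_eq_iff)
    then show ?thesis using True by simp
  next
    case False
    have "det (\<chi> r. if r = j then ?M $ k else ?M $ r) = 0"
      by (rule det_identical_rows[of j k]) (use False in \<open>auto simp: row_def vec_eq_iff\<close>)
    then show ?thesis using False by simp
  qed
  finally show ?thesis .
qed

definition adj_coeff :: "complex^'n::finite^'n \<Rightarrow> nat \<Rightarrow> complex^'n^'n" where
  "adj_coeff A n = (\<chi> i j. coeff (adj_mat A $ i $ j) n)"

text \<open>Comparing coefficients of X^n in char_mat A ** adj_mat A = det (char_mat A) * I.\<close>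
lemma adj_coeff_rel:
  "(if n = 0 then 0 else adj_coeff A (n - 1)) - A ** adj_coeff A n
     = (\<chi> i j. if i = j then coeff (det (char_mat A)) n else 0)"
proof -
  have "((if n = 0 then 0 else adj_coeff A (n - 1)) - A ** adj_coeff A n) $ k $ j
      = coeff (\<Sum>i\<in>UNIV. char_mat A $ k $ i * adj_mat A $ i $ j) n" for k j
  proof -
    have "coeff (\<Sum>i\<in>UNIV. char_mat A $ k $ i * adj_mat A $ i $ j) n =
        (\<Sum>i\<in>UNIV. (if k = i then (if n = 0 then 0 else coeff (adj_mat A $ i $ j) (n - 1)) else 0)) -
        (\<Sum>i\<in>UNIV. A $ k $ i * coeff (adj_mat A $ i $ j) n)"
      unfolding coeff_sum sum_subtractf[symmetric]
      by (intro sum.cong refl) (auto simp: char_mat_def left_diff_distrib coeff_pCons')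
    then show ?thesis
      by (simp add: matrix_matrix_mult_def adj_coeff_def sum.delta)
  qed
  then show ?thesis unfolding char_mat_adj by (simp add: vec_eq_iff)
qed

lemma vector_matrix_sum:
  "(\<Sum>x\<in>S. f x) v* (A :: 'a::comm_semiring_1^'n::finite^'m::finite) = (\<Sum>x\<in>S. f x v* A)"
  by (induction S rule: infinite_finite_induct) (simp_all add: vector_matrix_left_distrib)

lemma vector_matrix_diff_left:
  "(x - y) v* (A :: 'a::comm_ring_1^'n::finite^'m::finite) = x v* A - y v* A"
  by (simp add: vec_eq_iff vector_matrix_mult_def algebra_simps sum_subtractf)

lemma vector_matrix_diff_right:
  "x v* (M - N :: 'a::comm_ring_1^'n::finite^'m::finite) = x v* M - x v* N"
  by (simp add: vec_eq_iff vector_matrix_mult_def algebra_simps sum_subtractf)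

lemma vector_smult_sum: "c *s (\<Sum>x\<in>S. f x) = (\<Sum>x\<in>S. c *s (f x :: 'a::comm_ring_1^'n::finite))"
  by (induction S rule: infinite_finite_induct) (simp_all add: vector_add_ldistrib)

lemma adj_coeff_vec_rel:
  "(if n = 0 then 0 else x v* adj_coeff A (n - 1)) - (x v* A) v* adj_coeff A n
     = coeff (det (char_mat A)) n *s x"
proof -
  have "(if n = 0 then 0 else x v* adj_coeff A (n - 1)) - (x v* A) v* adj_coeff A n
      = x v* ((if n = 0 then 0 else adj_coeff A (n - 1)) - A ** adj_coeff A n)"
    by (simp add: vector_matrix_mul_assoc vector_matrix_diff_right)
  also have "\<dots> = coeff (det (char_mat A)) n *s x"
    unfolding adj_coeff_rel
    by (simp add: vec_eq_iff vector_matrix_mult_def if_distrib sum.delta' cong: if_cong)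
  finally show ?thesis .
qed

definition poly_act :: "complex^'n::finite^'n \<Rightarrow> complex poly \<Rightarrow> complex^'n \<Rightarrow> complex^'n" where
  "poly_act A p c = (\<Sum>k\<le>degree p. coeff p k *s ((\<lambda>x. x v* A) ^^ k) c)"

lemma poly_act_upto: "degree p \<le> K \<Longrightarrow> poly_act A p c = (\<Sum>k\<le>K. coeff p k *s ((\<lambda>x. x v* A) ^^ k) c)"
  unfolding poly_act_def by (rule sum.mono_neutral_left) (auto simp: coeff_eq_0)

text \<open>Cayley-Hamilton: the sum over n of coeff(det) n * x A^n telescopes by adj_coeff_vec_rel.\<close>
theorem cayley_hamilton: "poly_act A (charpoly_cart A) c = 0"
proof -
  define X where "X k = ((\<lambda>x. x v* A) ^^ k) c" for k
  have X_Suc: "X (Suc k) = X k v* A" for k by (simp add: X_def)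
  define K where "K = degree (det (char_mat A)) + Max (range (\<lambda>(i, j). degree (adj_mat A $ i $ j)))"
  have "degree (adj_mat A $ i $ j) \<le> K" for i j
  proof -
    have "degree (adj_mat A $ i $ j) \<le> Max (range (\<lambda>(i, j). degree (adj_mat A $ i $ j)))"
      by (rule Max_ge) (auto intro: image_eqI[where x="(i, j)"])
    then show ?thesis unfolding K_def by simp
  qed
  then have top: "adj_coeff A (Suc K) = 0"
    unfolding adj_coeff_def by (auto simp: vec_eq_iff intro!: coeff_eq_0 le_imp_less_Suc)
  have "degree (det (char_mat A)) \<le> Suc K" unfolding K_def by simp
  then have "poly_act A (charpoly_cart A) c = (\<Sum>k\<le>Suc K. coeff (det (char_mat A)) k *s X k)"
    unfolding charpoly_char_mat X_def by (rule poly_act_upto)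
  also have "\<dots> = (\<Sum>k\<le>Suc K. (if k = 0 then 0 else X k v* adj_coeff A (k - 1))
                                  - X (Suc k) v* adj_coeff A k)"
    by (intro sum.cong refl) (simp add: adj_coeff_vec_rel[symmetric] X_Suc)
  also have "\<dots> = (\<Sum>k\<le>Suc K. (if k = 0 then 0 else X k v* adj_coeff A (k - 1)))
                  - (\<Sum>k\<le>Suc K. X (Suc k) v* adj_coeff A k)"
    by (simp add: sum_subtractf)
  also have "(\<Sum>k\<le>Suc K. (if k = 0 then 0 else X k v* adj_coeff A (k - 1)))
      = (\<Sum>k\<le>K. X (Suc k) v* adj_coeff A k)"
    by (subst sum.atMost_Suc_shift) simp
  also have "(\<Sum>k\<le>Suc K. X (Suc k) v* adj_coeff A k) = (\<Sum>k\<le>K. X (Suc k) v* adj_coeff A k)"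
    using top by simp
  finally show ?thesis by simp
qed

subsection \<open>Primary decomposition\<close>

definition eig_shift :: "complex^'n::finite^'n \<Rightarrow> complex \<Rightarrow> complex^'n \<Rightarrow> complex^'n" where
  "eig_shift A \<mu> x = x v* A - \<mu> *s x"

lemma poly_act_linear_factor: "poly_act A ([:-\<mu>, 1:] * q) c = eig_shift A \<mu> (poly_act A q c)"
proof -
  define X where "X k = ((\<lambda>x. x v* A) ^^ k) c" for k
  have X_Suc: "X (Suc k) = X k v* A" for k by (simp add: X_def)
  define D where "D = degree q"
  have deg: "degree ([:-\<mu>, 1:] * q) \<le> Suc D"
    unfolding D_def using degree_mult_le[of "[:-\<mu>, 1:]" q] by simp
  have cf: "coeff ([:-\<mu>, 1:] * q) k = coeff (pCons 0 q) k - \<mu> * coeff q k" for k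
    by (simp add: mult_pCons_left)
  have "poly_act A ([:-\<mu>, 1:] * q) c
      = (\<Sum>k\<le>Suc D. coeff (pCons 0 q) k *s X k) - \<mu> *s (\<Sum>k\<le>Suc D. coeff q k *s X k)"
    unfolding poly_act_upto[OF deg] X_def[symmetric] cf vector_sub_rdistrib sum_subtractf
      vector_smult_sum vector_smult_assoc ..
  also have "(\<Sum>k\<le>Suc D. coeff (pCons 0 q) k *s X k) = (\<Sum>k\<le>D. coeff q k *s X k) v* A"
    by (subst sum.atMost_Suc_shift) (simp add: vector_matrix_sum X_Suc scalar_vector_matrix_assoc)
  also have "(\<Sum>k\<le>Suc D. coeff q k *s X k) = (\<Sum>k\<le>D. coeff q k *s X k)"
    by (simp add: D_def coeff_eq_0)
  finally show ?thesis unfolding eig_shift_def poly_act_def D_def X_def .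
qed

lemma poly_act_prod_linear:
  "poly_act A (prod_list (map (\<lambda>\<mu>. [:-\<mu>, 1:]) ms)) c = fold (eig_shift A) (rev ms) c"
proof (induction ms)
  case Nil then show ?case by (simp add: poly_act_def)
next
  case (Cons \<mu> ms)
  have "poly_act A (prod_list (map (\<lambda>\<mu>. [:-\<mu>, 1:]) (\<mu> # ms))) c
      = eig_shift A \<mu> (poly_act A (prod_list (map (\<lambda>\<mu>. [:-\<mu>, 1:]) ms)) c)"
    by (simp only: list.map prod_list.Cons poly_act_linear_factor)
  then show ?case by (simp add: Cons.IH)
qed

lemma eig_shift_add: "eig_shift A \<mu> (x + y) = eig_shift A \<mu> x + eig_shift A \<mu> y"
  unfolding eig_shift_def by (simp add: vector_matrix_left_distrib vector_add_ldistrib)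
lemma eig_shift_diff: "eig_shift A \<mu> (x - y) = eig_shift A \<mu> x - eig_shift A \<mu> y"
  unfolding eig_shift_def by (simp add: vector_matrix_diff_left vector_ssub_ldistrib)
lemma eig_shift_smult: "eig_shift A \<mu> (a *s x) = a *s eig_shift A \<mu> x"
  unfolding eig_shift_def by (simp add: scalar_vector_matrix_assoc vector_ssub_ldistrib mult.commute)
lemma eig_shift_zero: "eig_shift A \<mu> 0 = 0"
  unfolding eig_shift_def by simp
lemma eig_shift_sum: "eig_shift A \<mu> (\<Sum>x\<in>S. f x) = (\<Sum>x\<in>S. eig_shift A \<mu> (f x))"
  by (induction S rule: infinite_finite_induct) (simp_all add: eig_shift_add eig_shift_zero)
lemma eig_shift_sum_list:
  "eig_shift A \<mu> (sum_list (map f xs)) = sum_list (map (\<lambda>x. eig_shift A \<mu> (f x)) xs)"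
  by (induction xs) (simp_all add: eig_shift_add eig_shift_zero)
lemma eig_shift_change: "eig_shift A \<mu> x = eig_shift A \<nu> x + (\<nu> - \<mu>) *s x"
  unfolding eig_shift_def by (simp add: vector_sub_rdistrib)

lemma eig_shift_pow_zero: "(eig_shift A \<mu> ^^ k) 0 = 0"
  by (induction k) (simp_all add: eig_shift_zero)
lemma eig_shift_pow_smult: "(eig_shift A \<mu> ^^ k) (a *s x) = a *s (eig_shift A \<mu> ^^ k) x"
  by (induction k) (simp_all add: eig_shift_smult)
lemma eig_shift_pow_sum: "(eig_shift A \<mu> ^^ k) (\<Sum>x\<in>S. f x) = (\<Sum>x\<in>S. (eig_shift A \<mu> ^^ k) (f x))"
  by (induction k) (simp_all add: eig_shift_sum)
lemma eig_shift_pow_add: "(eig_shift A \<mu> ^^ k) (x + y) = (eig_shift A \<mu> ^^ k) x + (eig_shift A \<mu> ^^ k) y"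
  by (induction k) (simp_all add: eig_shift_add)
lemma eig_shift_pow_sum_list:
  "(eig_shift A \<mu> ^^ k) (sum_list (map f xs)) = sum_list (map (\<lambda>x. (eig_shift A \<mu> ^^ k) (f x)) xs)"
  by (induction xs) (simp_all add: eig_shift_pow_add eig_shift_pow_zero)

lemma eig_shift_pow_mono:
  assumes "(eig_shift A \<nu> ^^ r) d = 0" "r \<le> s"
  shows "(eig_shift A \<nu> ^^ s) d = 0"
proof -
  obtain k where "s = k + r" using assms(2) by (metis add.commute le_add_diff_inverse)
  then have "(eig_shift A \<nu> ^^ s) d = (eig_shift A \<nu> ^^ k) ((eig_shift A \<nu> ^^ r) d)"
    by (simp add: funpow_add)
  then show ?thesis using assms(1) eig_shift_pow_zero by simp
qed

text \<open>On a vector d with (A - nu)^r d = 0, the operator A - mu (mu \<noteq> nu) is inverted by a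
  finite Neumann series.\<close>
definition eig_shift_inv :: "complex^'n::finite^'n \<Rightarrow> complex \<Rightarrow> complex \<Rightarrow> nat \<Rightarrow> complex^'n \<Rightarrow> complex^'n" where
  "eig_shift_inv A \<nu> \<mu> r d = (\<Sum>k<r. ((-1) ^ k / (\<nu> - \<mu>) ^ Suc k) *s (eig_shift A \<nu> ^^ k) d)"

lemma eig_shift_inv_right:
  assumes "\<nu> \<noteq> \<mu>" "(eig_shift A \<nu> ^^ r) d = 0"
  shows "eig_shift A \<mu> (eig_shift_inv A \<nu> \<mu> r d) = d"
proof -
  define u where "u k = ((-1) ^ k / (\<nu> - \<mu>) ^ k) *s (eig_shift A \<nu> ^^ k) d" for k
  have "eig_shift A \<mu> (eig_shift_inv A \<nu> \<mu> r d)
      = eig_shift A \<nu> (eig_shift_inv A \<nu> \<mu> r d) + (\<nu> - \<mu>) *s eig_shift_inv A \<nu> \<mu> r d"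
    by (rule eig_shift_change)
  also have "\<dots> = (\<Sum>k<r. u k - u (Suc k))"
  proof -
    have "eig_shift A \<nu> (eig_shift_inv A \<nu> \<mu> r d) = (\<Sum>k<r. - u (Suc k))"
      unfolding eig_shift_inv_def eig_shift_sum eig_shift_smult u_def
      by (intro sum.cong refl) (simp add: vector_smult_assoc[symmetric] field_simps)
    moreover have "(\<nu> - \<mu>) *s eig_shift_inv A \<nu> \<mu> r d = (\<Sum>k<r. u k)"
      unfolding eig_shift_inv_def vector_smult_sum u_def using assms(1)
      by (intro sum.cong refl) (simp add: vector_smult_assoc field_simps)
    ultimately show ?thesis by (simp add: sum_subtractf sum_negf)
  qed
  also have "\<dots> = u 0 - u r" by (rule sum_lessThan_telescope')
  also have "\<dots> = d" using assms(2) by (simp add: u_def)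
  finally show ?thesis .
qed

lemma eig_shift_inv_nilpotent:
  assumes "(eig_shift A \<nu> ^^ r) d = 0"
  shows "(eig_shift A \<nu> ^^ r) (eig_shift_inv A \<nu> \<mu> r d) = 0"
proof -
  have "(eig_shift A \<nu> ^^ r) ((eig_shift A \<nu> ^^ k) d) = 0" for k
    using assms eig_shift_pow_mono[OF assms, of "r + k"] by (simp add: funpow_add)
  then show ?thesis unfolding eig_shift_inv_def eig_shift_pow_sum eig_shift_pow_smult by simp
qed

text \<open>Pieces with eigenvalue nu \<noteq> mu are pulled back
  by eig_shift_inv; what remains is killed by (A - mu)^(r+1).\<close>
lemma primary_decomposition_step:
  assumes c: "eig_shift A \<mu> c = sum_list (map snd ps)"
    and ps: "\<And>p. p \<in> set ps \<Longrightarrow> (eig_shift A (fst p) ^^ r) (snd p) = 0"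
  shows "\<exists>qs. c = sum_list (map snd qs) \<and>
           (\<forall>q\<in>set qs. (fst q = \<mu> \<or> fst q \<in> fst ` set ps) \<and> (eig_shift A (fst q) ^^ Suc r) (snd q) = 0)"
proof -
  have ps': "(eig_shift A a ^^ r) b = 0" if "(a, b) \<in> set ps" for a b
    using ps[OF that] by simp
  define others where "others = filter (\<lambda>p. fst p \<noteq> \<mu>) ps"
  define own where "own = filter (\<lambda>p. fst p = \<mu>) ps"
  define pull where "pull p = eig_shift_inv A (fst p) \<mu> r (snd p)" for p
  define c' where "c' = c - sum_list (map pull others)"
  have pulled: "eig_shift A \<mu> (sum_list (map pull others)) = sum_list (map snd others)"
    unfolding eig_shift_sum_list
    by (intro arg_cong[where f=sum_list] map_cong refl)
       (auto simp: pull_def others_def ps' intro!: eig_shift_inv_right)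
  have "sum_list (map snd ps) = sum_list (map snd own) + sum_list (map snd others)"
    unfolding own_def others_def by (induction ps) (auto simp: add_ac)
  then have "eig_shift A \<mu> c' = sum_list (map snd own)"
    unfolding c'_def eig_shift_diff pulled c by simp
  then have "(eig_shift A \<mu> ^^ Suc r) c' = sum_list (map (\<lambda>p. (eig_shift A \<mu> ^^ r) (snd p)) own)"
    by (simp add: funpow_Suc_right eig_shift_pow_sum_list del: funpow.simps)
  also have "\<dots> = sum_list (map (\<lambda>p. 0) own)"
    by (intro arg_cong[where f=sum_list] map_cong refl) (auto simp: own_def ps')
  also have "\<dots> = 0" by simp
  finally have own_part: "(eig_shift A \<mu> ^^ Suc r) c' = 0" .
  have pulled_part: "(eig_shift A (fst p) ^^ Suc r) (pull p) = 0" if "p \<in> set others" for p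
  proof -
    have "(eig_shift A (fst p) ^^ r) (pull p) = 0"
      using that ps unfolding pull_def others_def by (intro eig_shift_inv_nilpotent) auto
    then show ?thesis by (rule eig_shift_pow_mono) simp
  qed
  define qs where "qs = (\<mu>, c') # map (\<lambda>p. (fst p, pull p)) others"
  have "c = sum_list (map snd qs)" unfolding qs_def c'_def by (simp add: comp_def)
  moreover have "(eig_shift A (fst q) ^^ Suc r) (snd q) = 0" if "q \<in> set qs" for q
    using that own_part pulled_part by (auto simp: qs_def)
  moreover have "fst q = \<mu> \<or> fst q \<in> fst ` set ps" if "q \<in> set qs" for q
    using that by (force simp: qs_def others_def)
  ultimately show ?thesis by blast
qed

lemma primary_decomposition:
  "fold (eig_shift A) ms c = 0 \<Longrightarrow> \<exists>ps. c = sum_list (map snd ps) \<and>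
      (\<forall>p\<in>set ps. fst p \<in> set ms \<and> (eig_shift A (fst p) ^^ length ms) (snd p) = 0)"
proof (induction ms arbitrary: c)
  case Nil then show ?case by (intro exI[of _ "[]"]) simp
next
  case (Cons \<mu> ms)
  then obtain ps where "eig_shift A \<mu> c = sum_list (map snd ps)"
    and ps: "\<forall>p\<in>set ps. fst p \<in> set ms \<and> (eig_shift A (fst p) ^^ length ms) (snd p) = 0"
    by auto
  from primary_decomposition_step[OF this(1)] ps obtain qs where "c = sum_list (map snd qs)"
    "\<forall>q\<in>set qs. (fst q = \<mu> \<or> fst q \<in> fst ` set ps) \<and> (eig_shift A (fst q) ^^ Suc (length ms)) (snd q) = 0"
    by blast
  moreover have "fst ` set ps \<subseteq> set ms" using ps by auto
  ultimately show ?case by (intro exI[of _ qs]) auto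
qed

subsection \<open>The filtration of C[[x]] by powers of the maximal ideal\<close>

definition mdeg :: "('n::finite \<Rightarrow> nat) \<Rightarrow> nat" where
  "mdeg \<beta> = (\<Sum>i\<in>UNIV. \<beta> i)"

text \<open>ord_ge d is the ideal m^d: series all of whose coefficients of degree below d vanish.\<close>
definition ord_ge :: "nat \<Rightarrow> 'n::finite mfps set" where
  "ord_ge d = {f. \<forall>\<beta>. mdeg \<beta> < d \<longrightarrow> f \<beta> = 0}"

definition below :: "('n \<Rightarrow> nat) \<Rightarrow> ('n \<Rightarrow> nat) set" where
  "below \<gamma> = {\<alpha>. \<forall>i. \<alpha> i \<le> \<gamma> i}"

lemma mfps_mult_below: "mfps_mult f g = (\<lambda>\<gamma>. \<Sum>\<alpha>\<in>below \<gamma>. f \<alpha> * g (\<lambda>i. \<gamma> i - \<alpha> i))"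
  unfolding mfps_mult_def below_def ..

lemma finite_below: "finite (below (\<gamma> :: 'n::finite \<Rightarrow> nat))"
proof -
  have "below \<gamma> = Pi\<^sub>E UNIV (\<lambda>i. {..\<gamma> i})" by (auto simp: below_def PiE_UNIV_domain)
  then show ?thesis by (simp add: finite_PiE)
qed

lemma finite_mdeg_eq: "finite {\<gamma>::'n::finite \<Rightarrow> nat. mdeg \<gamma> = d}"
proof (rule finite_subset[OF _ finite_below[of "\<lambda>_. d"]])
  show "{\<gamma>::'n \<Rightarrow> nat. mdeg \<gamma> = d} \<subseteq> below (\<lambda>_. d)"
    unfolding below_def mdeg_def by (auto intro: member_le_sum)
qed

lemma mdeg_below_split: "\<alpha> \<in> below \<gamma> \<Longrightarrow> mdeg \<alpha> + mdeg (\<lambda>i. \<gamma> i - \<alpha> i) = mdeg (\<gamma>::'n::finite \<Rightarrow> nat)"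
  unfolding mdeg_def below_def by (simp add: sum.distrib[symmetric])

lemma mdeg_zero_iff: "mdeg \<beta> = 0 \<longleftrightarrow> \<beta> = (\<lambda>_. 0)"
  unfolding mdeg_def by (auto simp: fun_eq_iff)

lemma mdeg_inc: "mdeg (\<beta>(i := Suc (\<beta> i))) = Suc (mdeg \<beta>)"
  unfolding mdeg_def by (simp add: sum.remove[of UNIV i])

lemma mdeg_dec: "0 < \<beta> i \<Longrightarrow> mdeg (\<beta>(i := \<beta> i - 1)) = mdeg \<beta> - 1"
  unfolding mdeg_def by (simp add: sum.remove[of UNIV i])

definition unit_exp :: "'n \<Rightarrow> 'n \<Rightarrow> nat" where
  "unit_exp i = (\<lambda>j. if j = i then 1 else 0)"

lemma coord_unit_exp: "coord i = mono (unit_exp i)"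
  unfolding coord_def unit_exp_def ..

lemma coord_at_unit_exp: "coord j (unit_exp k) = (if k = j then 1 else 0)"
  unfolding coord_unit_exp mono_def unit_exp_def by (auto simp: fun_eq_iff)

lemma mdeg_one: "mdeg \<beta> = 1 \<Longrightarrow> \<exists>k. \<beta> = unit_exp k"
proof -
  assume d: "mdeg \<beta> = 1"
  then obtain k where k: "0 < \<beta> k" using mdeg_zero_iff by (metis gr0I one_neq_zero)
  have "mdeg \<beta> = \<beta> k + (\<Sum>i\<in>UNIV - {k}. \<beta> i)" unfolding mdeg_def by (simp add: sum.remove)
  then have "\<beta> k = 1" and rest: "(\<Sum>i\<in>UNIV - {k}. \<beta> i) = 0" using d k by linarith+
  moreover have "\<beta> i = 0" if "i \<noteq> k" for i
    using rest that by (simp add: sum_eq_0_iff)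
  ultimately have "\<beta> = unit_exp k" unfolding unit_exp_def by (intro ext) auto
  then show ?thesis by blast
qed

lemma ord_ge_mono: "d \<le> e \<Longrightarrow> f \<in> ord_ge e \<Longrightarrow> f \<in> ord_ge d"
  unfolding ord_ge_def by auto

lemma ord_ge_0 [simp]: "f \<in> ord_ge 0"
  unfolding ord_ge_def by simp

lemma ord_ge_zero [simp]: "(\<lambda>\<beta>. 0) \<in> ord_ge d"
  unfolding ord_ge_def by auto

lemma ord_ge_add: "f \<in> ord_ge d \<Longrightarrow> g \<in> ord_ge d \<Longrightarrow> (\<lambda>\<beta>. f \<beta> + g \<beta>) \<in> ord_ge d"
  unfolding ord_ge_def by auto

lemma ord_ge_diff: "f \<in> ord_ge d \<Longrightarrow> g \<in> ord_ge d \<Longrightarrow> (\<lambda>\<beta>. f \<beta> - g \<beta>) \<in> ord_ge d"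
  unfolding ord_ge_def by auto

lemma ord_ge_smult: "f \<in> ord_ge d \<Longrightarrow> (\<lambda>\<beta>. c * f \<beta>) \<in> ord_ge d"
  unfolding ord_ge_def by auto

lemma ord_ge_sum: "(\<And>x. x \<in> A \<Longrightarrow> h x \<in> ord_ge d) \<Longrightarrow> (\<lambda>\<beta>. \<Sum>x\<in>A. h x \<beta>) \<in> ord_ge d"
  unfolding ord_ge_def by (auto intro!: sum.neutral)

lemma ord_ge_sum_list:
  "(\<And>x. x \<in> set xs \<Longrightarrow> g x \<in> ord_ge d) \<Longrightarrow> (\<lambda>\<beta>. sum_list (map (\<lambda>x. g x \<beta>) xs)) \<in> ord_ge d"
  unfolding ord_ge_def by (induction xs) auto

lemma ord_ge_mult: "f \<in> ord_ge a \<Longrightarrow> g \<in> ord_ge b \<Longrightarrow> mfps_mult f g \<in> ord_ge (a + b)"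
proof -
  assume f: "f \<in> ord_ge a" and g: "g \<in> ord_ge b"
  show ?thesis unfolding ord_ge_def mfps_mult_below
  proof (intro CollectI allI impI sum.neutral ballI)
    fix \<gamma> :: "'a \<Rightarrow> nat" and \<alpha> assume d: "mdeg \<gamma> < a + b" and \<alpha>: "\<alpha> \<in> below \<gamma>"
    from mdeg_below_split[OF \<alpha>] d have "mdeg \<alpha> < a \<or> mdeg (\<lambda>i. \<gamma> i - \<alpha> i) < b" by linarith
    then show "f \<alpha> * g (\<lambda>i. \<gamma> i - \<alpha> i) = 0" using f g unfolding ord_ge_def by auto
  qed
qed

lemma coord_ord_ge_1: "coord i \<in> ord_ge 1"
  unfolding ord_ge_def coord_unit_exp mono_def by (auto simp: mdeg_zero_iff unit_exp_def fun_eq_iff)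

lemma ord_ge_homogeneous_part:
  fixes f :: "'n::finite mfps"
  assumes "f \<in> ord_ge d"
  shows "(\<lambda>\<beta>. f \<beta> - (\<Sum>\<gamma>\<in>{\<gamma>. mdeg \<gamma> = d}. f \<gamma> * mono \<gamma> \<beta>)) \<in> ord_ge (Suc d)"
  unfolding ord_ge_def
proof (intro CollectI allI impI)
  fix \<beta> :: "'n \<Rightarrow> nat" assume \<beta>: "mdeg \<beta> < Suc d"
  have "(\<Sum>\<gamma>\<in>{\<gamma>. mdeg \<gamma> = d}. f \<gamma> * mono \<gamma> \<beta>) = (\<Sum>\<gamma>\<in>{\<gamma>. mdeg \<gamma> = d}. if \<gamma> = \<beta> then f \<gamma> else 0)"
    by (intro sum.cong) (auto simp: mono_def)
  also have "\<dots> = (if mdeg \<beta> = d then f \<beta> else 0)" by (simp add: sum.delta sum.delta' finite_mdeg_eq)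
  finally show "f \<beta> - (\<Sum>\<gamma>\<in>{\<gamma>. mdeg \<gamma> = d}. f \<gamma> * mono \<gamma> \<beta>) = 0"
    using assms \<beta> unfolding ord_ge_def by auto
qed

lemma mult_add_left: "mfps_mult (\<lambda>\<beta>. f \<beta> + g \<beta>) h = (\<lambda>\<beta>. mfps_mult f h \<beta> + mfps_mult g h \<beta>)"
  unfolding mfps_mult_below by (simp add: distrib_right sum.distrib)
lemma mult_add_right: "mfps_mult h (\<lambda>\<beta>. f \<beta> + g \<beta>) = (\<lambda>\<beta>. mfps_mult h f \<beta> + mfps_mult h g \<beta>)"
  unfolding mfps_mult_below by (simp add: distrib_left sum.distrib)
lemma mult_diff_left: "mfps_mult (\<lambda>\<beta>. f \<beta> - g \<beta>) h = (\<lambda>\<beta>. mfps_mult f h \<beta> - mfps_mult g h \<beta>)"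
  unfolding mfps_mult_below by (simp add: left_diff_distrib sum_subtractf)
lemma mult_diff_right: "mfps_mult h (\<lambda>\<beta>. f \<beta> - g \<beta>) = (\<lambda>\<beta>. mfps_mult h f \<beta> - mfps_mult h g \<beta>)"
  unfolding mfps_mult_below by (simp add: right_diff_distrib sum_subtractf)
lemma mult_smult_left: "mfps_mult (\<lambda>\<beta>. c * f \<beta>) h = (\<lambda>\<beta>. c * mfps_mult f h \<beta>)"
  unfolding mfps_mult_below by (simp add: sum_distrib_left mult.assoc)
lemma mult_smult_right: "mfps_mult h (\<lambda>\<beta>. c * f \<beta>) = (\<lambda>\<beta>. c * mfps_mult h f \<beta>)"
  unfolding mfps_mult_below by (simp add: sum_distrib_left mult.left_commute)
lemma mult_zero_left: "mfps_mult (\<lambda>\<beta>. 0) f = (\<lambda>\<beta>. 0)"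
  unfolding mfps_mult_below by simp
lemma mult_zero_right: "mfps_mult f (\<lambda>\<beta>. 0) = (\<lambda>\<beta>. 0)"
  unfolding mfps_mult_below by simp
lemma mult_sum_list_left:
  "mfps_mult (\<lambda>\<beta>. sum_list (map (\<lambda>x. g x \<beta>) xs)) f = (\<lambda>\<beta>. sum_list (map (\<lambda>x. mfps_mult (g x) f \<beta>) xs))"
  by (induction xs) (simp_all add: mult_zero_left mult_add_left)
lemma mult_sum_list_right:
  "mfps_mult f (\<lambda>\<beta>. sum_list (map (\<lambda>x. g x \<beta>) xs)) = (\<lambda>\<beta>. sum_list (map (\<lambda>x. mfps_mult f (g x) \<beta>) xs))"
  by (induction xs) (simp_all add: mult_zero_right mult_add_right)

lemma mult_coord:
  "mfps_mult (coord i) g \<beta> = (if 0 < \<beta> i then g (\<beta>(i := \<beta> i - 1)) else 0)"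
proof -
  have "mfps_mult (coord i) g \<beta> = (\<Sum>\<alpha>\<in>below \<beta>. if \<alpha> = unit_exp i then g (\<lambda>j. \<beta> j - \<alpha> j) else 0)"
    unfolding mfps_mult_below coord_unit_exp mono_def by (intro sum.cong) auto
  also have "\<dots> = (if unit_exp i \<in> below \<beta> then g (\<lambda>j. \<beta> j - unit_exp i j) else 0)"
    by (simp add: sum.delta[OF finite_below])
  also have "\<dots> = (if 0 < \<beta> i then g (\<beta>(i := \<beta> i - 1)) else 0)"
  proof -
    have "unit_exp i \<in> below \<beta> \<longleftrightarrow> 0 < \<beta> i" by (auto simp: below_def unit_exp_def)
    moreover have "(\<lambda>j. \<beta> j - unit_exp i j) = \<beta>(i := \<beta> i - 1)" by (auto simp: unit_exp_def)
    ultimately show ?thesis by simp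
  qed
  finally show ?thesis .
qed

lemma mono_inc: "mono (\<gamma>(i := Suc (\<gamma> i))) = mfps_mult (coord i) (mono \<gamma>)"
  by (auto simp: fun_eq_iff mult_coord mono_def split: if_splits)

lemma mult_one_left: "mfps_mult (mono (\<lambda>_. 0)) f = f"
proof
  fix \<beta>
  have "mfps_mult (mono (\<lambda>_. 0)) f \<beta> = (\<Sum>\<alpha>\<in>below \<beta>. if \<alpha> = (\<lambda>_. 0) then f (\<lambda>j. \<beta> j - \<alpha> j) else 0)"
    unfolding mfps_mult_below mono_def by (intro sum.cong) auto
  also have "\<dots> = f \<beta>" by (subst sum.delta[OF finite_below]) (simp add: below_def)
  finally show "mfps_mult (mono (\<lambda>_. 0)) f \<beta> = f \<beta>" .
qed

lemma mult_one_right: "mfps_mult f (mono (\<lambda>_. 0)) = f"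
proof
  fix \<beta>
  have "mfps_mult f (mono (\<lambda>_. 0)) \<beta> = (\<Sum>\<alpha>\<in>below \<beta>. if \<alpha> = \<beta> then f \<alpha> else 0)"
    unfolding mfps_mult_below mono_def
  proof (intro sum.cong refl)
    fix \<alpha> assume "\<alpha> \<in> below \<beta>"
    then have "(\<lambda>i. \<beta> i - \<alpha> i) = (\<lambda>_. 0) \<longleftrightarrow> \<alpha> = \<beta>"
      by (auto simp: below_def fun_eq_iff intro: antisym)
    then show "f \<alpha> * (if (\<lambda>i. \<beta> i - \<alpha> i) = (\<lambda>_. 0) then 1 else 0) = (if \<alpha> = \<beta> then f \<alpha> else 0)"
      by simp
  qed
  also have "\<dots> = f \<beta>" by (subst sum.delta[OF finite_below]) (simp add: below_def)
  finally show "mfps_mult f (mono (\<lambda>_. 0)) \<beta> = f \<beta>" .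
qed

text \<open>Every series of order d+1 is a combination sum of x_i g_i with each g_i of order d.
  The coefficient of x^beta is assigned to a chosen index i with beta i > 0.\<close>
definition pick_index :: "('n \<Rightarrow> nat) \<Rightarrow> 'n" where
  "pick_index \<beta> = (SOME i. 0 < \<beta> i)"

definition coord_quot :: "'n::finite mfps \<Rightarrow> 'n \<Rightarrow> 'n mfps" where
  "coord_quot f i = (\<lambda>\<delta>. if pick_index (\<delta>(i := Suc (\<delta> i))) = i then f (\<delta>(i := Suc (\<delta> i))) else 0)"

lemma coord_quot_ord_ge: "f \<in> ord_ge (Suc d) \<Longrightarrow> coord_quot f i \<in> ord_ge d"
  unfolding ord_ge_def coord_quot_def by (auto simp: mdeg_inc)

lemma coord_quot_expansion:
  assumes "f \<in> ord_ge (Suc d)"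
  shows "f = (\<lambda>\<beta>. \<Sum>i\<in>UNIV. mfps_mult (coord i) (coord_quot f i) \<beta>)"
proof
  fix \<beta>
  have summand: "mfps_mult (coord i) (coord_quot f i) \<beta> = (if 0 < \<beta> i \<and> pick_index \<beta> = i then f \<beta> else 0)" for i
  proof (cases "0 < \<beta> i")
    case True
    then have "(\<beta>(i := \<beta> i - 1))(i := Suc ((\<beta>(i := \<beta> i - 1)) i)) = \<beta>" by auto
    then show ?thesis using True by (simp add: mult_coord coord_quot_def)
  qed (simp add: mult_coord)
  show "f \<beta> = (\<Sum>i\<in>UNIV. mfps_mult (coord i) (coord_quot f i) \<beta>)"
  proof (cases "\<exists>i. 0 < \<beta> i")
    case True
    then have "0 < \<beta> (pick_index \<beta>)" unfolding pick_index_def by (rule someI_ex)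
    then have "(\<Sum>i\<in>UNIV. mfps_mult (coord i) (coord_quot f i) \<beta>)
        = (\<Sum>i\<in>UNIV. if i = pick_index \<beta> then f \<beta> else 0)"
      unfolding summand by (intro sum.cong) auto
    then show ?thesis by simp
  next
    case False
    then have "\<beta> = (\<lambda>_. 0)" by auto
    then have "f \<beta> = 0" using assms unfolding ord_ge_def by (simp add: mdeg_def)
    then show ?thesis unfolding summand using False by simp
  qed
qed

subsection \<open>Derivations and their shifts V - mu\<close>

locale derivation =
  fixes V :: "'n::finite mfps \<Rightarrow> 'n mfps"
  assumes der: "is_der0 V"
begin

lemma V_add: "V (\<lambda>\<beta>. f \<beta> + g \<beta>) = (\<lambda>\<beta>. V f \<beta> + V g \<beta>)"
  using der unfolding is_der0_def by blast
lemma V_smult: "V (\<lambda>\<beta>. c * f \<beta>) = (\<lambda>\<beta>. c * V f \<beta>)"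
  using der unfolding is_der0_def by blast
lemma V_mult: "V (mfps_mult f g) = (\<lambda>\<beta>. mfps_mult (V f) g \<beta> + mfps_mult f (V g) \<beta>)"
  using der unfolding is_der0_def by blast
lemma V_maximal_ideal: "f (\<lambda>_. 0) = 0 \<Longrightarrow> V f (\<lambda>_. 0) = 0"
  using der unfolding is_der0_def by blast

lemma V_zero: "V (\<lambda>\<beta>. 0) = (\<lambda>\<beta>. 0)"
  using V_smult[of 0 "\<lambda>\<beta>. 0"] by simp

lemma V_diff: "V (\<lambda>\<beta>. f \<beta> - g \<beta>) = (\<lambda>\<beta>. V f \<beta> - V g \<beta>)"
  using V_add[of f "\<lambda>\<beta>. (-1) * g \<beta>"] V_smult[of "-1" g] by simp

lemma V_sum: "V (\<lambda>\<beta>. \<Sum>x\<in>A. h x \<beta>) = (\<lambda>\<beta>. \<Sum>x\<in>A. V (h x) \<beta>)"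
proof (induction A rule: infinite_finite_induct)
  case (insert x F)
  then have "V (\<lambda>\<beta>. \<Sum>x\<in>insert x F. h x \<beta>) = V (\<lambda>\<beta>. h x \<beta> + (\<lambda>\<beta>. \<Sum>x\<in>F. h x \<beta>) \<beta>)"
    by simp
  then show ?case unfolding V_add insert.IH using insert by simp
qed (simp_all add: V_zero)

text \<open>A derivation kills constants: V 1 = V (1 * 1) = 2 V 1.\<close>
lemma V_one: "V (mono (\<lambda>_. 0)) = (\<lambda>\<beta>. 0)"
proof -
  let ?u = "mono (\<lambda>_. 0) :: 'n mfps"
  have "V ?u = (\<lambda>\<beta>. V ?u \<beta> + V ?u \<beta>)"
    using V_mult[of ?u ?u] unfolding mult_one_left mult_one_right .
  then show ?thesis by (metis add_cancel_left_right)
qed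

text \<open>V preserves every power of the maximal ideal: write f in m^(d+1) as a sum of x_i g_i
  and use the Leibniz rule together with V(m) \<subseteq> m.\<close>
lemma V_ord_ge: "f \<in> ord_ge d \<Longrightarrow> V f \<in> ord_ge d"
proof (induction d arbitrary: f)
  case 0 then show ?case by simp
next
  case (Suc d)
  have "V f = (\<lambda>\<beta>. \<Sum>i\<in>UNIV. V (mfps_mult (coord i) (coord_quot f i)) \<beta>)"
    by (subst coord_quot_expansion[OF Suc.prems]) (rule V_sum)
  also have "\<dots> \<in> ord_ge (Suc d)"
  proof (intro ord_ge_sum)
    fix i
    have c: "V (coord i) \<in> ord_ge 1"
      using V_maximal_ideal[of "coord i"] coord_ord_ge_1[of i]
      unfolding ord_ge_def by (auto simp: mdeg_zero_iff less_Suc_eq)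
    have g: "coord_quot f i \<in> ord_ge d" using coord_quot_ord_ge[OF Suc.prems] .
    show "V (mfps_mult (coord i) (coord_quot f i)) \<in> ord_ge (Suc d)"
      unfolding V_mult using ord_ge_mult[OF c g] ord_ge_mult[OF coord_ord_ge_1 Suc.IH[OF g]]
      by (intro ord_ge_add) auto
  qed
  finally show ?case .
qed

definition Vminus :: "complex \<Rightarrow> 'n mfps \<Rightarrow> 'n mfps" where
  "Vminus \<mu> f = (\<lambda>\<beta>. V f \<beta> - \<mu> * f \<beta>)"

lemma Vminus_ord_ge: "f \<in> ord_ge d \<Longrightarrow> Vminus \<mu> f \<in> ord_ge d"
  unfolding Vminus_def by (intro ord_ge_diff V_ord_ge ord_ge_smult)

lemma Vminus_pow_ord_ge: "f \<in> ord_ge d \<Longrightarrow> (Vminus \<mu> ^^ k) f \<in> ord_ge d"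
  by (induction k) (auto intro: Vminus_ord_ge)

lemma Vminus_add: "Vminus \<mu> (\<lambda>\<beta>. f \<beta> + g \<beta>) = (\<lambda>\<beta>. Vminus \<mu> f \<beta> + Vminus \<mu> g \<beta>)"
  unfolding Vminus_def V_add by (simp add: algebra_simps)
lemma Vminus_diff: "Vminus \<mu> (\<lambda>\<beta>. f \<beta> - g \<beta>) = (\<lambda>\<beta>. Vminus \<mu> f \<beta> - Vminus \<mu> g \<beta>)"
  unfolding Vminus_def V_diff by (simp add: algebra_simps)
lemma Vminus_smult: "Vminus \<mu> (\<lambda>\<beta>. c * f \<beta>) = (\<lambda>\<beta>. c * Vminus \<mu> f \<beta>)"
  unfolding Vminus_def V_smult by (simp add: algebra_simps)
lemma Vminus_sum: "Vminus \<mu> (\<lambda>\<beta>. \<Sum>x\<in>A. h x \<beta>) = (\<lambda>\<beta>. \<Sum>x\<in>A. Vminus \<mu> (h x) \<beta>)"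
  unfolding Vminus_def V_sum by (simp add: sum_subtractf sum_distrib_left)

lemma Vminus_pow_add:
  "(Vminus \<mu> ^^ k) (\<lambda>\<beta>. f \<beta> + g \<beta>) = (\<lambda>\<beta>. (Vminus \<mu> ^^ k) f \<beta> + (Vminus \<mu> ^^ k) g \<beta>)"
  by (induction k) (simp_all add: Vminus_add)

lemma Vminus_commute: "Vminus a (Vminus b f) = Vminus b (Vminus a f)"
  unfolding Vminus_def V_diff V_smult by (simp add: algebra_simps fun_eq_iff)

lemma Vminus_leibniz:
  "Vminus (a + b) (mfps_mult f g) = (\<lambda>\<beta>. mfps_mult (Vminus a f) g \<beta> + mfps_mult f (Vminus b g) \<beta>)"
  unfolding Vminus_def V_mult mult_diff_left mult_diff_right mult_smult_left mult_smult_right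
  by (simp add: fun_eq_iff algebra_simps)

text \<open>Consequently, if (V - a)^m kills f \<in> m^d and (V - b)^p kills g \<in> m^e modulo the next
  power of m, then (V - a - b)^(m+p) kills f g modulo m^(d+e+1): expanding by the Leibniz
  rule, every term applies either at least m factors V - a to f or at least p factors V - b
  to g.\<close>
lemma Vminus_pow_product:
  assumes "f \<in> ord_ge d" "g \<in> ord_ge e"
    and "(Vminus a ^^ m) f \<in> ord_ge (Suc d)" "(Vminus b ^^ p) g \<in> ord_ge (Suc e)"
  shows "(Vminus (a + b) ^^ (m + p)) (mfps_mult f g) \<in> ord_ge (Suc (d + e))"
  using assms
proof (induction "m + p" arbitrary: m p f g)
  case 0
  then have "m + p = 0" "f \<in> ord_ge (Suc d)" "g \<in> ord_ge (Suc e)" by auto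
  then show ?case using ord_ge_mult[of f "Suc d" g e] ord_ge_mono[of e "Suc e" g] by simp
next
  case (Suc n)
  have split: "(Vminus (a + b) ^^ Suc n) (mfps_mult f g) =
     (\<lambda>\<beta>. (Vminus (a + b) ^^ n) (mfps_mult (Vminus a f) g) \<beta>
         + (Vminus (a + b) ^^ n) (mfps_mult f (Vminus b g)) \<beta>)"
    by (simp add: funpow_Suc_right Vminus_leibniz Vminus_pow_add del: funpow.simps)
  have left: "(Vminus (a + b) ^^ n) (mfps_mult (Vminus a f) g) \<in> ord_ge (Suc (d + e))"
  proof (cases m)
    case 0
    then have "f \<in> ord_ge (Suc d)" using Suc by simp
    from ord_ge_mult[OF Vminus_ord_ge[OF this] Suc.prems(2)]
    have "mfps_mult (Vminus a f) g \<in> ord_ge (Suc (d + e))" by simp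
    then show ?thesis by (rule Vminus_pow_ord_ge)
  next
    case (Suc m')
    then have "(Vminus a ^^ m') (Vminus a f) \<in> ord_ge (Suc d)"
      using Suc.prems(3) by (simp add: funpow_Suc_right del: funpow.simps)
    then show ?thesis using Suc.hyps(1)[of m' p "Vminus a f" g] Suc.hyps(2) Suc.prems Vminus_ord_ge Suc
      by auto
  qed
  have right: "(Vminus (a + b) ^^ n) (mfps_mult f (Vminus b g)) \<in> ord_ge (Suc (d + e))"
  proof (cases p)
    case 0
    then have "g \<in> ord_ge (Suc e)" using Suc by simp
    from ord_ge_mult[OF Suc.prems(1) Vminus_ord_ge[OF this]]
    have "mfps_mult f (Vminus b g) \<in> ord_ge (Suc (d + e))" by simp
    then show ?thesis by (rule Vminus_pow_ord_ge)
  next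
    case (Suc p')
    then have "(Vminus b ^^ p') (Vminus b g) \<in> ord_ge (Suc e)"
      using Suc.prems(4) by (simp add: funpow_Suc_right del: funpow.simps)
    then show ?thesis using Suc.hyps(1)[of m p' f "Vminus b g"] Suc.hyps(2) Suc.prems Vminus_ord_ge Suc
      by auto
  qed
  show ?case using ord_ge_add[OF left right] unfolding split Suc.hyps(2)[symmetric] .
qed

lemma fold_Vminus_ord_ge: "f \<in> ord_ge d \<Longrightarrow> fold Vminus ms f \<in> ord_ge d"
  by (induction ms arbitrary: f) (auto intro: Vminus_ord_ge)
lemma fold_Vminus_add:
  "fold Vminus ms (\<lambda>\<beta>. f \<beta> + g \<beta>) = (\<lambda>\<beta>. fold Vminus ms f \<beta> + fold Vminus ms g \<beta>)"
  by (induction ms arbitrary: f g) (simp_all add: Vminus_add)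
lemma fold_Vminus_smult: "fold Vminus ms (\<lambda>\<beta>. c * f \<beta>) = (\<lambda>\<beta>. c * fold Vminus ms f \<beta>)"
  by (induction ms arbitrary: f) (simp_all add: Vminus_smult)
lemma fold_Vminus_sum:
  "fold Vminus ms (\<lambda>\<beta>. \<Sum>x\<in>A. h x \<beta>) = (\<lambda>\<beta>. \<Sum>x\<in>A. fold Vminus ms (h x) \<beta>)"
  by (induction ms arbitrary: h) (simp_all add: Vminus_sum)
lemma fold_Vminus_sum_list:
  "fold Vminus ms (\<lambda>\<beta>. sum_list (map (\<lambda>x. h x \<beta>) xs)) = (\<lambda>\<beta>. sum_list (map (\<lambda>x. fold Vminus ms (h x) \<beta>) xs))"
proof (induction xs)
  case Nil then show ?case using fold_Vminus_smult[of ms 0 "\<lambda>\<beta>. 0"] by simp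
qed (simp add: fold_Vminus_add)
lemma fold_Vminus_pow: "fold Vminus ms ((Vminus \<mu> ^^ r) f) = (Vminus \<mu> ^^ r) (fold Vminus ms f)"
proof -
  have "fold Vminus ms (Vminus \<mu> f) = Vminus \<mu> (fold Vminus ms f)" for f
  proof (induction ms arbitrary: f)
    case (Cons a ms)
    show ?case using Cons.IH[of "Vminus a f"] by (simp add: Vminus_commute[of a \<mu> f])
  qed simp
  then show ?thesis by (induction r) simp_all
qed

lemma V_pow_ord_ge: "f \<in> ord_ge d \<Longrightarrow> (V ^^ k) f \<in> ord_ge d"
  by (induction k) (auto intro: V_ord_ge)

lemma shift_sub_V_pow: "shift_sub \<mu> (\<lambda>k. (V ^^ k) f \<beta>) = (\<lambda>k. (V ^^ k) (Vminus \<mu> f) \<beta>)"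
proof -
  have "(V ^^ k) (Vminus \<mu> f) = (\<lambda>\<beta>. (V ^^ k) (V f) \<beta> - \<mu> * (V ^^ k) f \<beta>)" for k
    unfolding Vminus_def by (induction k) (simp_all add: V_diff V_smult)
  then show ?thesis unfolding shift_sub_def by (simp add: funpow_Suc_right del: funpow.simps)
qed

lemma fold_shift_sub_V_pow:
  "fold shift_sub ms (\<lambda>k. (V ^^ k) f \<beta>) = (\<lambda>k. (V ^^ k) (fold Vminus ms f) \<beta>)"
  by (induction ms arbitrary: f) (simp_all add: shift_sub_V_pow)

end

subsection \<open>Linear forms and the linear part\<close>

definition linform :: "complex^'n::finite \<Rightarrow> 'n mfps" where
  "linform c = (\<lambda>\<beta>. \<Sum>j\<in>UNIV. c $ j * coord j \<beta>)"

lemma linform_ord_ge_1: "linform c \<in> ord_ge 1"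
  unfolding linform_def using coord_ord_ge_1 by (intro ord_ge_sum ord_ge_smult)

lemma linform_add: "linform (x + y) = (\<lambda>\<beta>. linform x \<beta> + linform y \<beta>)"
  unfolding linform_def by (simp add: distrib_right sum.distrib)

lemma linform_zero: "linform 0 = (\<lambda>\<beta>. 0)"
  unfolding linform_def by simp

lemma linform_sum_list:
  "linform (sum_list (map g xs)) = (\<lambda>\<beta>. sum_list (map (\<lambda>x. linform (g x) \<beta>) xs))"
  by (induction xs) (simp_all add: linform_add linform_zero)

lemma linform_axis: "linform (axis i 1) = coord i"
proof
  fix \<beta>
  have "linform (axis i 1) \<beta> = (\<Sum>j\<in>UNIV. if j = i then coord j \<beta> else 0)"
    unfolding linform_def by (intro sum.cong) (auto simp: axis_def)
  then show "linform (axis i 1) \<beta> = coord i \<beta>" by simp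
qed

lemma mdeg_less_2: "mdeg \<beta> < 2 \<Longrightarrow> \<beta> = (\<lambda>_. 0) \<or> (\<exists>k. \<beta> = unit_exp k)"
proof -
  assume "mdeg \<beta> < 2"
  then have "mdeg \<beta> = 0 \<or> mdeg \<beta> = 1" by arith
  then show ?thesis using mdeg_one mdeg_zero_iff by blast
qed

context derivation
begin

lemma V_linform: "(\<lambda>\<beta>. V (linform c) \<beta> - linform (c v* linear_part V) \<beta>) \<in> ord_ge 2"
  unfolding ord_ge_def
proof (intro CollectI allI impI)
  have V_lin: "V (linform c) = (\<lambda>\<beta>. \<Sum>j\<in>UNIV. c $ j * V (coord j) \<beta>)"
    unfolding linform_def V_sum V_smult ..
  fix \<beta> :: "'n \<Rightarrow> nat" assume "mdeg \<beta> < 2"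
  then consider "\<beta> = (\<lambda>_. 0)" | k where "\<beta> = unit_exp k" using mdeg_less_2 by blast
  then show "V (linform c) \<beta> - linform (c v* linear_part V) \<beta> = 0"
  proof cases
    case 1
    have "coord j (\<lambda>_. 0) = 0" for j :: 'n
      using coord_ord_ge_1[of j] unfolding ord_ge_def mdeg_def by simp
    then show ?thesis unfolding V_lin 1 using V_maximal_ideal by (simp add: linform_def)
  next
    case 2
    have "V (coord j) (unit_exp k) = linear_part V $ j $ k" for j :: 'n
      unfolding linear_part_def unit_exp_def by simp
    moreover have "(\<Sum>j\<in>UNIV. (c v* linear_part V) $ j * coord j (unit_exp k))
        = (\<Sum>j\<in>UNIV. if j = k then (c v* linear_part V) $ j else 0)"
      by (intro sum.cong) (auto simp: coord_at_unit_exp)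
    ultimately show ?thesis unfolding V_lin 2
      by (simp add: linform_def vector_matrix_mult_def)
  qed
qed

lemma Vminus_linform:
  "(\<lambda>\<beta>. Vminus \<mu> (linform c) \<beta> - linform (eig_shift (linear_part V) \<mu> c) \<beta>) \<in> ord_ge 2"
proof -
  have "linform (eig_shift (linear_part V) \<mu> c)
      = (\<lambda>\<beta>. linform (c v* linear_part V) \<beta> - \<mu> * linform c \<beta>)"
    unfolding eig_shift_def linform_def by (simp add: left_diff_distrib sum_subtractf sum_distrib_left mult.assoc)
  then show ?thesis using V_linform[of c] unfolding Vminus_def ord_ge_def by auto
qed

lemma Vminus_pow_linform:
  "(\<lambda>\<beta>. (Vminus \<mu> ^^ k) (linform c) \<beta> - linform ((eig_shift (linear_part V) \<mu> ^^ k) c) \<beta>) \<in> ord_ge 2"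
proof (induction k)
  case 0 then show ?case by (simp add: ord_ge_def)
next
  case (Suc k)
  let ?f = "(Vminus \<mu> ^^ k) (linform c)" and ?c = "(eig_shift (linear_part V) \<mu> ^^ k) c"
  have "(Vminus \<mu> ^^ Suc k) (linform c)
      = (\<lambda>\<beta>. Vminus \<mu> (\<lambda>\<beta>. ?f \<beta> - linform ?c \<beta>) \<beta> + Vminus \<mu> (linform ?c) \<beta>)"
    unfolding Vminus_diff by simp
  moreover have "Vminus \<mu> (\<lambda>\<beta>. ?f \<beta> - linform ?c \<beta>) \<in> ord_ge 2"
    using Vminus_ord_ge[OF Suc.IH] .
  ultimately show ?case using Vminus_linform[of \<mu> ?c] unfolding ord_ge_def by auto
qed

end

subsection \<open>Splitting monomials into generalized eigen-pieces\<close>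

text \<open>Eigen-pieces are lists of pairs (eigenvalue, series); lsum adds up the series.\<close>
definition lsum :: "(complex \<times> 'n::finite mfps) list \<Rightarrow> 'n mfps" where
  "lsum hs = (\<lambda>\<beta>. sum_list (map (\<lambda>h. snd h \<beta>) hs))"

definition piece_products ::
    "(complex \<times> (complex^'n::finite)) list \<Rightarrow> (complex \<times> 'n mfps) list \<Rightarrow> (complex \<times> 'n mfps) list" where
  "piece_products ps hs =
     concat (map (\<lambda>p. map (\<lambda>h. (fst p + fst h, mfps_mult (linform (snd p)) (snd h))) hs) ps)"

lemma sum_list_map_concat:
  "sum_list (map f (concat (map g xs))) = sum_list (map (\<lambda>x. sum_list (map f (g x))) xs)"
  by (induction xs) simp_all

lemma piece_products_remainder:
  assumes "(\<lambda>\<beta>. f \<beta> - lsum hs \<beta>) \<in> ord_ge (Suc d)"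
  shows "(\<lambda>\<beta>. mfps_mult (\<lambda>\<beta>. sum_list (map (\<lambda>p. linform (snd p) \<beta>) ps)) f \<beta>
             - lsum (piece_products ps hs) \<beta>) \<in> ord_ge (Suc (Suc d))"
proof -
  define R where "R = (\<lambda>\<beta>. f \<beta> - lsum hs \<beta>)"
  have "f = (\<lambda>\<beta>. lsum hs \<beta> + R \<beta>)" unfolding R_def by simp
  then have "mfps_mult (\<lambda>\<beta>. sum_list (map (\<lambda>p. linform (snd p) \<beta>) ps)) f = (\<lambda>\<beta>. sum_list (map (\<lambda>p.
      sum_list (map (\<lambda>h. mfps_mult (linform (snd p)) (snd h) \<beta>) hs)
      + mfps_mult (linform (snd p)) R \<beta>) ps))"
    unfolding mult_sum_list_left by (simp add: mult_add_right lsum_def mult_sum_list_right)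
  moreover have "lsum (piece_products ps hs) = (\<lambda>\<beta>. sum_list (map (\<lambda>p.
      sum_list (map (\<lambda>h. mfps_mult (linform (snd p)) (snd h) \<beta>) hs)) ps))"
    unfolding lsum_def piece_products_def by (simp add: sum_list_map_concat comp_def)
  ultimately have "(\<lambda>\<beta>. mfps_mult (\<lambda>\<beta>. sum_list (map (\<lambda>p. linform (snd p) \<beta>) ps)) f \<beta>
        - lsum (piece_products ps hs) \<beta>)
      = (\<lambda>\<beta>. sum_list (map (\<lambda>p. mfps_mult (linform (snd p)) R \<beta>) ps))"
    by (simp add: sum_list_addf)
  also have "\<dots> \<in> ord_ge (Suc (Suc d))"
    using ord_ge_mult[OF linform_ord_ge_1 assms[folded R_def]] by (intro ord_ge_sum_list) simp
  finally show ?thesis .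
qed

text \<open>From now on ls lists the eigenvalues of the linear part with multiplicity, so that by
  Cayley-Hamilton the product of the operators A - mu over ls vanishes.\<close>
locale derivation_spectrum = derivation V for V :: "'n::finite mfps \<Rightarrow> 'n mfps" +
  fixes ls :: "complex list"
  assumes annihilates: "\<And>c. fold (eig_shift (linear_part V)) ls c = 0"
begin

definition eig_sums_deg :: "nat \<Rightarrow> complex set" where
  "eig_sums_deg d = set (map sum_list (List.n_lists d ls))"

definition nil_exp :: "nat \<Rightarrow> nat" where
  "nil_exp d = d * length ls + 1"

definition eigen_split :: "nat \<Rightarrow> 'n mfps \<Rightarrow> bool" where
  "eigen_split d f \<longleftrightarrow> f \<in> ord_ge d \<and> (\<exists>hs. (\<lambda>\<beta>. f \<beta> - lsum hs \<beta>) \<in> ord_ge (Suc d) \<and>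
     (\<forall>h\<in>set hs. fst h \<in> eig_sums_deg d \<and> snd h \<in> ord_ge d \<and>
                  (Vminus (fst h) ^^ nil_exp d) (snd h) \<in> ord_ge (Suc d)))"

text \<open>Each coordinate is a sum of linear forms killed by (V - mu)^n modulo m^2, mu \<in> ls:
  this is the primary decomposition of the unit vector.\<close>
lemma coord_eigen_pieces:
  "\<exists>ps. coord i = (\<lambda>\<beta>. sum_list (map (\<lambda>p. linform (snd p) \<beta>) ps)) \<and>
     (\<forall>p\<in>set ps. fst p \<in> set ls \<and> (Vminus (fst p) ^^ length ls) (linform (snd p)) \<in> ord_ge 2)"
proof -
  obtain ps where ps: "axis i 1 = sum_list (map snd ps)"
    "\<forall>p\<in>set ps. fst p \<in> set ls \<and> (eig_shift (linear_part V) (fst p) ^^ length ls) (snd p) = 0"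
    using primary_decomposition[OF annihilates[of "axis i 1"]] by blast
  have "coord i = (\<lambda>\<beta>. sum_list (map (\<lambda>p. linform (snd p) \<beta>) ps))"
    using linform_sum_list[of snd ps] ps(1) linform_axis[of i] by simp
  moreover have "(Vminus (fst p) ^^ length ls) (linform (snd p)) \<in> ord_ge 2" if "p \<in> set ps" for p
    using Vminus_pow_linform[where \<mu>="fst p" and k="length ls" and c="snd p"] ps(2) that
    by (simp add: linform_zero)
  ultimately show ?thesis using ps(2) by blast
qed

lemma eigen_split_one: "eigen_split 0 (mono (\<lambda>_. 0))"
  unfolding eigen_split_def
proof (intro conjI exI[of _ "[(0, mono (\<lambda>_. 0))]"])
  show "(\<lambda>\<beta>. mono (\<lambda>_. 0) \<beta> - lsum [(0, mono (\<lambda>_. 0))] \<beta>) \<in> ord_ge (Suc 0)"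
    by (simp add: lsum_def)
  have "Vminus 0 (mono (\<lambda>_. 0)) = (\<lambda>\<beta>. 0)" unfolding Vminus_def V_one by simp
  then show "\<forall>h\<in>set [(0, mono (\<lambda>_. 0))]. fst h \<in> eig_sums_deg 0 \<and> snd h \<in> ord_ge 0 \<and>
      (Vminus (fst h) ^^ nil_exp 0) (snd h) \<in> ord_ge (Suc 0)"
    by (simp add: eig_sums_deg_def nil_exp_def)
qed simp

lemma eigen_piece_mult:
  assumes "\<mu> \<in> set ls" "(Vminus \<mu> ^^ length ls) (linform c) \<in> ord_ge 2"
    and "\<nu> \<in> eig_sums_deg d" "h \<in> ord_ge d" "(Vminus \<nu> ^^ nil_exp d) h \<in> ord_ge (Suc d)"
  shows "\<mu> + \<nu> \<in> eig_sums_deg (Suc d)" "mfps_mult (linform c) h \<in> ord_ge (Suc d)"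
    "(Vminus (\<mu> + \<nu>) ^^ nil_exp (Suc d)) (mfps_mult (linform c) h) \<in> ord_ge (Suc (Suc d))"
proof -
  from assms(3) obtain xs where "xs \<in> set (List.n_lists d ls)" "\<nu> = sum_list xs"
    unfolding eig_sums_deg_def by auto
  then have "\<mu> + \<nu> = sum_list (\<mu> # xs)" "\<mu> # xs \<in> set (List.n_lists (Suc d) ls)"
    using assms(1) unfolding set_n_lists by auto
  then show "\<mu> + \<nu> \<in> eig_sums_deg (Suc d)" unfolding eig_sums_deg_def set_map by (rule image_eqI)
  show "mfps_mult (linform c) h \<in> ord_ge (Suc d)"
    using ord_ge_mult[OF linform_ord_ge_1 assms(4)] by simp
  have "(Vminus (\<mu> + \<nu>) ^^ (length ls + nil_exp d)) (mfps_mult (linform c) h) \<in> ord_ge (Suc (1 + d))"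
    using assms(2,5) by (intro Vminus_pow_product linform_ord_ge_1 assms(4)) (simp_all add: numeral_2_eq_2)
  then show "(Vminus (\<mu> + \<nu>) ^^ nil_exp (Suc d)) (mfps_mult (linform c) h) \<in> ord_ge (Suc (Suc d))"
    by (simp add: nil_exp_def)
qed

text \<open>Multiplying a split series by a coordinate gives a split series of the next degree:
  distribute the eigen-pieces of x_i over those of f.\<close>
lemma eigen_split_mult_coord:
  assumes "eigen_split d f"
  shows "eigen_split (Suc d) (mfps_mult (coord i) f)"
proof -
  obtain hs where hs: "(\<lambda>\<beta>. f \<beta> - lsum hs \<beta>) \<in> ord_ge (Suc d)"
    "\<And>h. h \<in> set hs \<Longrightarrow> fst h \<in> eig_sums_deg d \<and> snd h \<in> ord_ge d \<and>
                         (Vminus (fst h) ^^ nil_exp d) (snd h) \<in> ord_ge (Suc d)"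
    and f: "f \<in> ord_ge d" using assms unfolding eigen_split_def by blast
  obtain ps where ps: "coord i = (\<lambda>\<beta>. sum_list (map (\<lambda>p. linform (snd p) \<beta>) ps))"
    "\<And>p. p \<in> set ps \<Longrightarrow> fst p \<in> set ls \<and> (Vminus (fst p) ^^ length ls) (linform (snd p)) \<in> ord_ge 2"
    using coord_eigen_pieces[of i] by blast
  have "fst q \<in> eig_sums_deg (Suc d) \<and> snd q \<in> ord_ge (Suc d) \<and>
      (Vminus (fst q) ^^ nil_exp (Suc d)) (snd q) \<in> ord_ge (Suc (Suc d))"
    if "q \<in> set (piece_products ps hs)" for q
  proof -
    have "\<exists>p\<in>set ps. \<exists>h\<in>set hs. q = (fst p + fst h, mfps_mult (linform (snd p)) (snd h))"
      using that unfolding piece_products_def by auto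
    then obtain p h where "p \<in> set ps" "h \<in> set hs"
      and q: "q = (fst p + fst h, mfps_mult (linform (snd p)) (snd h))"
      by blast
    with ps(2) hs(2) show ?thesis using eigen_piece_mult[of "fst p" "snd p" "fst h" d "snd h"] by auto
  qed
  moreover have "mfps_mult (coord i) f \<in> ord_ge (Suc d)"
    using ord_ge_mult[OF coord_ord_ge_1 f] by simp
  ultimately show ?thesis
    unfolding eigen_split_def using piece_products_remainder[OF hs(1), of ps] ps(1) by auto
qed

lemma eigen_split_mono: "eigen_split (mdeg \<gamma>) (mono \<gamma>)"
proof (induction "mdeg \<gamma>" arbitrary: \<gamma>)
  case 0
  then have "\<gamma> = (\<lambda>_. 0)" using mdeg_zero_iff by metis
  then show ?case using eigen_split_one by (simp add: mdeg_def)
next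
  case (Suc n)
  then obtain i where i: "0 < \<gamma> i" using mdeg_zero_iff by (metis gr0I nat.distinct(1))
  define \<gamma>' where "\<gamma>' = \<gamma>(i := \<gamma> i - 1)"
  have "mdeg \<gamma>' = n" unfolding \<gamma>'_def using mdeg_dec[of \<gamma> i, OF i] Suc.hyps(2) by simp
  moreover have "\<gamma> = \<gamma>'(i := Suc (\<gamma>' i))" unfolding \<gamma>'_def using i by auto
  ultimately show ?case
    using eigen_split_mult_coord[OF Suc.hyps(1)[of \<gamma>'], of i] Suc.hyps(2) by (simp add: mono_inc)
qed

subsection \<open>The annihilating operator\<close>

definition level_annihilator :: "nat \<Rightarrow> complex list" where
  "level_annihilator d = concat (map (\<lambda>\<mu>. replicate (nil_exp d) \<mu>) (map sum_list (List.n_lists d ls)))"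

lemma eigen_split_annihilated:
  assumes "eigen_split d f"
  shows "fold Vminus (level_annihilator d) f \<in> ord_ge (Suc d)"
proof -
  obtain hs where hs: "(\<lambda>\<beta>. f \<beta> - lsum hs \<beta>) \<in> ord_ge (Suc d)"
    "\<And>h. h \<in> set hs \<Longrightarrow> fst h \<in> eig_sums_deg d \<and> snd h \<in> ord_ge d \<and>
                         (Vminus (fst h) ^^ nil_exp d) (snd h) \<in> ord_ge (Suc d)"
    using assms unfolding eigen_split_def by blast
  define R where "R = (\<lambda>\<beta>. f \<beta> - lsum hs \<beta>)"
  have piece: "fold Vminus (level_annihilator d) (snd h) \<in> ord_ge (Suc d)" if h: "h \<in> set hs" for h
  proof -
    have "fst h \<in> set (map sum_list (List.n_lists d ls))"
      using hs(2)[OF h] unfolding eig_sums_deg_def by blast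
    then obtain a b where ab: "map sum_list (List.n_lists d ls) = a @ fst h # b"
      by (meson split_list)
    define blocks where "blocks = (\<lambda>xs. concat (map (\<lambda>\<mu>::complex. replicate (nil_exp d) \<mu>) xs))"
    have "level_annihilator d = blocks a @ replicate (nil_exp d) (fst h) @ blocks b"
      unfolding level_annihilator_def ab blocks_def by simp
    then have "fold Vminus (level_annihilator d) (snd h)
        = fold Vminus (blocks b) (fold Vminus (blocks a) ((Vminus (fst h) ^^ nil_exp d) (snd h)))"
      by (simp add: fold_Vminus_pow)
    then show ?thesis using hs(2)[OF h] by (simp add: fold_Vminus_ord_ge)
  qed
  have "f = (\<lambda>\<beta>. lsum hs \<beta> + R \<beta>)" unfolding R_def by simp
  then have "fold Vminus (level_annihilator d) f
      = (\<lambda>\<beta>. sum_list (map (\<lambda>h. fold Vminus (level_annihilator d) (snd h) \<beta>) hs)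
             + fold Vminus (level_annihilator d) R \<beta>)"
    by (simp add: fold_Vminus_add lsum_def fold_Vminus_sum_list)
  also have "\<dots> \<in> ord_ge (Suc d)"
    using piece fold_Vminus_ord_ge[OF hs(1)[folded R_def]] by (intro ord_ge_add ord_ge_sum_list) auto
  finally show ?thesis .
qed

text \<open>The operator for level d lowers all of m^d into m^(d+1), by linearity from monomials.\<close>
lemma level_annihilator_ord_ge:
  assumes "f \<in> ord_ge d"
  shows "fold Vminus (level_annihilator d) f \<in> ord_ge (Suc d)"
proof -
  define S where "S = (\<lambda>\<beta>. \<Sum>\<gamma>\<in>{\<gamma>. mdeg \<gamma> = d}. f \<gamma> * mono \<gamma> \<beta>)"
  have "fold Vminus (level_annihilator d) S
      = (\<lambda>\<beta>. \<Sum>\<gamma>\<in>{\<gamma>. mdeg \<gamma> = d}. f \<gamma> * fold Vminus (level_annihilator d) (mono \<gamma>) \<beta>)"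
    unfolding S_def fold_Vminus_sum fold_Vminus_smult ..
  also have "\<dots> \<in> ord_ge (Suc d)"
    using eigen_split_annihilated[OF eigen_split_mono] by (intro ord_ge_sum ord_ge_smult) auto
  finally have homogeneous: "fold Vminus (level_annihilator d) S \<in> ord_ge (Suc d)" .
  have rest: "fold Vminus (level_annihilator d) (\<lambda>\<beta>. f \<beta> - S \<beta>) \<in> ord_ge (Suc d)"
    using ord_ge_homogeneous_part[OF assms] unfolding S_def by (intro fold_Vminus_ord_ge) simp
  have f_split: "f = (\<lambda>\<beta>. (\<lambda>\<beta>. f \<beta> - S \<beta>) \<beta> + S \<beta>)" by simp
  show ?thesis
    by (subst f_split) (simp only: fold_Vminus_add, rule ord_ge_add[OF rest homogeneous])
qed

definition annihilator :: "nat \<Rightarrow> complex list" where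
  "annihilator N = concat (map level_annihilator [0..<Suc N])"

lemma annihilator_ord_ge: "fold Vminus (annihilator N) f \<in> ord_ge (Suc N)"
proof (induction N arbitrary: f)
  case 0 then show ?case using level_annihilator_ord_ge[of f 0] by (simp add: annihilator_def)
next
  case (Suc N)
  have "annihilator (Suc N) = annihilator N @ level_annihilator (Suc N)" unfolding annihilator_def by simp
  then show ?case using level_annihilator_ord_ge[OF Suc.IH] by simp
qed

lemma annihilator_eigenvalues: "x \<in> set (annihilator N) \<Longrightarrow> \<exists>xs. set xs \<subseteq> set ls \<and> x = sum_list xs"
  unfolding annihilator_def level_annihilator_def by (auto simp: set_n_lists)

text \<open>Hence the coefficient sequence k \<mapsto> (V^k x^alpha)_beta is annihilated by
  fold shift_sub (annihilator (mdeg beta)), and is quasi-exponential.\<close>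
lemma coeff_seq_qexp:
  assumes "set ls \<subseteq> range lam"
  shows "(\<lambda>k. (V ^^ k) (mono \<alpha>) \<beta>) \<in> qexp_span (eig_sums lam)"
proof (rule annihilated_in_qexp_span)
  show "set (annihilator (mdeg \<beta>)) \<subseteq> eig_sums lam"
    using annihilator_eigenvalues sum_list_in_eig_sums assms by (metis subsetI subset_trans)
  have "(V ^^ k) (fold Vminus (annihilator (mdeg \<beta>)) (mono \<alpha>)) \<in> ord_ge (Suc (mdeg \<beta>))" for k
    by (intro V_pow_ord_ge annihilator_ord_ge)
  then show "fold shift_sub (annihilator (mdeg \<beta>)) (\<lambda>k. (V ^^ k) (mono \<alpha>) \<beta>) = (\<lambda>_. 0)"
    unfolding fold_shift_sub_V_pow ord_ge_def by auto
qed

end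

theorem lemma3p3:
  fixes V :: "'n::finite mfps \<Rightarrow> 'n mfps"
    and lam :: "'n \<Rightarrow> complex"
    and \<alpha> \<beta> :: "'n \<Rightarrow> nat"
  assumes "is_der0 V"
    and "charpoly_cart (linear_part V) = (\<Prod>i\<in>UNIV. [:- lam i, 1:])"
  shows "mat_coeff V \<alpha> \<beta> \<in> exp_poly_ring lam"
proof -
  obtain xs :: "'n list" where xs: "set xs = UNIV" "distinct xs"
    using finite_distinct_list[of "UNIV :: 'n set"] by auto
  have "charpoly_cart (linear_part V) = prod_list (map (\<lambda>\<mu>. [:-\<mu>, 1:]) (map lam xs))"
    using assms(2) prod.distinct_set_conv_list[OF xs(2)] xs(1) by (simp add: comp_def)
  then have "fold (eig_shift (linear_part V)) (rev (map lam xs)) c = 0" for c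
    using cayley_hamilton[of "linear_part V" c] by (simp only: poly_act_prod_linear)
  then interpret derivation_spectrum V "rev (map lam xs)"
    using assms(1) by unfold_locales auto
  have "(\<lambda>k. (V ^^ k) (mono \<alpha>) \<beta>) \<in> qexp_span (eig_sums lam)"
    by (rule coeff_seq_qexp) auto
  from qexp_span_egf[OF this] show ?thesis
    unfolding mat_coeff_def by simp
qed

end
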